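(* Let $\mathcal{O}$ be a one-counter system with $n=|Q|$ states, and let $\alpha,\beta$ be configurations with counter value $0$ such that there exists an arc from $\alpha$ to $\beta$. Then there exists an arc $\rho$ from $\alpha$ to $\beta$ which is either low or normal. Moreover, if $\rho$ is normal, say $(S,T)$-normal, then it admits a normal decomposition $\rho=\rho_{\mathrm{pref}}\,\rho_{\mathrm{up}}\,\rho_{\mathrm{cap}}\,\rho_{\mathrm{down}}\,\rho_{\mathrm{suff}}$ with $\sigma_{\mathrm{up}}=\sigma^+_S$, $\sigma_{\mathrm{down}}=\sigma^-_T$ such that: (i) $\mathrm{proj}(\rho_{\mathrm{up}})=(\sigma_{\mathrm{up}})^a$ and $\mathrm{eff}(\sigma_{\mathrm{up}})=A$ for some $a,A\in\mathbb{N}$; (ii) $\mathrm{proj}(\rho_{\mathrm{down}})=(\sigma_{\mathrm{down}})^b$ and $\mathrm{eff}(\sigma_{\mathrm{down}})=-B$ for some $b,B\in\mathbb{N}$; (iii) $a\cdot A\le 2\,\mathrm{len}(\rho_{\mathrm{cap}})+2\,\mathrm{lcm}(A,B)$; (iv) $b\cdot B\le 2\,\mathrm{len}(\rho_{\mathrm{cap}})+2\,\mathrm{lcm}(A,B)$; (v) no infix (contiguous subsequence) of $\mathrm{proj}(\rho_{\mathrm{cap}})$ is a cycle whose effect is divisible by $\gcd(A,B)$; (vi) the counter value of the target of $\rho_{\mathrm{up}}$ and the counter value of the source of $\rho_{\mathrm{down}}$ are both greater than $n$; (vii) all configurations appearing on $\rho_{\mathrm{pref}}$ and on $\rho_{\mathrm{suff}}$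 (taken together) are pairwise different.
   Context: $\mathbb{N}=\{0,1,2,\dots\}$. A one-counter system (OCS) $\mathcal{O}$ consists of a finite set $Q$ of states, a set $T_{>0}\subseteq Q\times\{-1,0,1\}\times Q$ of non-zero transitions and a set $T_{=0}\subseteq Q\times\{0,1\}\times Q$ of zero tests. A configuration is a pair $(q,c)\in Q\times\mathbb{N}$ (state $q$, counter value $c$). A transition $t=(p,d,q)$ has source $p$, target $q$, effect $d$; it can be fired in $(p,c)$ if either $t\in T_{>0}$ and $c>0$, or $t\in T_{=0}$ and $c=0$, yielding $(q,c+d)$. A path is a sequence $(\gamma_1,t_1)\cdots(\gamma_m,t_m)$ such that, with some $\gamma_{m+1}$, firing $t_i$ in $\gamma_i$ yields $\gamma_{i+1}$ for all $i\le m$; its source is $\gamma_1$, target $\gamma_{m+1}$, length $\mathrm{len}=m$, configurations appearing on it are $\gamma_1,\dots,\gamma_{m+1}$, intermediate ones are $\gamma_2,\dots,\gamma_m$; its projection is $\mathrm{proj}=t_1\cdots t_m$ and its effect $\mathrm{eff}$ is the sum of the effects of its transitions. Paths are concatenated when the target of one is the source of the next. A sequence of transitions is consistent if each transition's target is the next one's source. A cycle is a consistent sequence of non-zero transitions starting and ending in the same state (its base state); positive/negative if its effect is positive/negative; simple if no state is visited twice except the base at start and end. The transition multigraph $G$ has vertices $Q$ and an edge $p\to q$ labelled $d$ for each $(p,d,q)\in T_{>0}$. A cycle is contained in an SCC $S$ of $G$ if all its states lie in $S$; $S$ is positively (negatively) enabled if it contains a positive (negative) cycle. For every positively enabled SCC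 $S$ one fixes, once and for all, a simple positive cycle $\sigma^+_S$ contained in $S$, and for every negatively enabled SCC $T$ a simple negative cycle $\sigma^-_T$ contained in $T$. An arc is a path whose source and target have counter value $0$ and whose intermediate configurations all have positive counter value. A path (or arc) is low if all configurations appearing on it (including the target) have counter value $<5n$. For SCCs $S,T$ of $G$, an arc $\rho$ is $(S,T)$-normal if it can be written as $\rho=\rho_{\mathrm{pref}}\rho_{\mathrm{up}}\rho_{\mathrm{cap}}\rho_{\mathrm{down}}\rho_{\mathrm{suff}}$ (a normal decomposition) where $\rho_{\mathrm{pref}},\rho_{\mathrm{suff}}$ are low, $\mathrm{proj}(\rho_{\mathrm{up}})=(\sigma^+_S)^k$ and $\mathrm{proj}(\rho_{\mathrm{down}})=(\sigma^-_T)^\ell$ for some $k,\ell\in\mathbb{N}$, the state of the source of $\rho_{\mathrm{cap}}$ is the base state of $\sigma^+_S$, and the state of the target of $\rho_{\mathrm{cap}}$ is the base state of $\sigma^-_T$. An arc is normal if it is $(S,T)$-normal for some SCCs $S,T$. *)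

theory Defs
  imports Main
begin

text \<open>An OCS is given by a state set Q and two transition sets Tpos (non-zero
transitions) and Tzero (zero tests).\<close>

type_synonym 'q trans = "'q \<times> int \<times> 'q"
type_synonym 'q conf = "'q \<times> nat"

definition src :: "'q trans \<Rightarrow> 'q" where "src t = fst t"
definition tgt :: "'q trans \<Rightarrow> 'q" where "tgt t = snd (snd t)"
definition deff :: "'q trans \<Rightarrow> int" where "deff t = fst (snd t)"

definition wf_ocs :: "'q set \<Rightarrow> 'q trans set \<Rightarrow> 'q trans set \<Rightarrow> bool" where
  "wf_ocs Q Tpos Tzero \<longleftrightarrow> finite Q \<and> Tpos \<subseteq> Q \<times> {-1,0,1} \<times> Q \<and> Tzero \<subseteq> Q \<times> {0,1} \<times> Q"

text \<open>A path is represented by its source configuration together with its projection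
(the sequence of fired transitions); all configurations on it are then determined.\<close>

fun is_path :: "'q trans set \<Rightarrow> 'q trans set \<Rightarrow> 'q conf \<Rightarrow> 'q trans list \<Rightarrow> bool" where
  "is_path Tpos Tzero \<gamma> [] = True"
| "is_path Tpos Tzero (q, c) (t # ts) =
     (src t = q \<and> ((t \<in> Tpos \<and> c > 0) \<or> (t \<in> Tzero \<and> c = 0)) \<and>
      is_path Tpos Tzero (tgt t, nat (int c + deff t)) ts)"

fun confs :: "'q conf \<Rightarrow> 'q trans list \<Rightarrow> 'q conf list" where
  "confs \<gamma> [] = [\<gamma>]"
| "confs (q, c) (t # ts) = (q, c) # confs (tgt t, nat (int c + deff t)) ts"

definition target :: "'q conf \<Rightarrow> 'q trans list \<Rightarrow> 'q conf" where
  "target \<gamma> ts = last (confs \<gamma> ts)"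

definition eff :: "'q trans list \<Rightarrow> int" where
  "eff ts = sum_list (map deff ts)"

definition consistent :: "'q trans list \<Rightarrow> bool" where
  "consistent ts \<longleftrightarrow> (\<forall>i. Suc i < length ts \<longrightarrow> tgt (ts ! i) = src (ts ! Suc i))"

definition is_cycle :: "'q trans set \<Rightarrow> 'q trans list \<Rightarrow> bool" where
  "is_cycle Tpos ts \<longleftrightarrow> ts \<noteq> [] \<and> set ts \<subseteq> Tpos \<and> consistent ts \<and> tgt (last ts) = src (hd ts)"

definition base :: "'q trans list \<Rightarrow> 'q" where
  "base ts = src (hd ts)"

definition simple_cycle :: "'q trans set \<Rightarrow> 'q trans list \<Rightarrow> bool" where
  "simple_cycle Tpos ts \<longleftrightarrow> is_cycle Tpos ts \<and> distinct (map src ts)"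

definition cycle_in :: "'q trans list \<Rightarrow> 'q set \<Rightarrow> bool" where
  "cycle_in ts S \<longleftrightarrow> set (map src ts) \<subseteq> S"

definition edges :: "'q trans set \<Rightarrow> ('q \<times> 'q) set" where
  "edges Tpos = {(p, q). \<exists>d. (p, d, q) \<in> Tpos}"

definition is_scc :: "'q set \<Rightarrow> 'q trans set \<Rightarrow> 'q set \<Rightarrow> bool" where
  "is_scc Q Tpos S \<longleftrightarrow>
     (\<exists>p\<in>Q. S = {q \<in> Q. (p, q) \<in> (edges Tpos)\<^sup>* \<and> (q, p) \<in> (edges Tpos)\<^sup>*})"

definition pos_enabled :: "'q trans set \<Rightarrow> 'q set \<Rightarrow> bool" where
  "pos_enabled Tpos S \<longleftrightarrow> (\<exists>ts. is_cycle Tpos ts \<and> cycle_in ts S \<and> eff ts > 0)"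

definition neg_enabled :: "'q trans set \<Rightarrow> 'q set \<Rightarrow> bool" where
  "neg_enabled Tpos S \<longleftrightarrow> (\<exists>ts. is_cycle Tpos ts \<and> cycle_in ts S \<and> eff ts < 0)"

definition good_choice :: "'q set \<Rightarrow> 'q trans set \<Rightarrow> ('q set \<Rightarrow> 'q trans list) \<Rightarrow>
    ('q set \<Rightarrow> 'q trans list) \<Rightarrow> bool" where
  "good_choice Q Tpos sigp sigm \<longleftrightarrow>
     (\<forall>S. is_scc Q Tpos S \<and> pos_enabled Tpos S \<longrightarrow>
        simple_cycle Tpos (sigp S) \<and> cycle_in (sigp S) S \<and> eff (sigp S) > 0) \<and>
     (\<forall>T. is_scc Q Tpos T \<and> neg_enabled Tpos T \<longrightarrow>
        simple_cycle Tpos (sigm T) \<and> cycle_in (sigm T) T \<and> eff (sigm T) < 0)"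

definition is_arc :: "'q trans set \<Rightarrow> 'q trans set \<Rightarrow> 'q conf \<Rightarrow> 'q trans list \<Rightarrow> bool" where
  "is_arc Tpos Tzero \<gamma> ts \<longleftrightarrow> is_path Tpos Tzero \<gamma> ts \<and> snd \<gamma> = 0 \<and> snd (target \<gamma> ts) = 0 \<and>
     (\<forall>i. 0 < i \<and> i < length ts \<longrightarrow> snd (confs \<gamma> ts ! i) > 0)"

definition low :: "nat \<Rightarrow> 'q conf \<Rightarrow> 'q trans list \<Rightarrow> bool" where
  "low n \<gamma> ts \<longleftrightarrow> (\<forall>x \<in> set (confs \<gamma> ts). snd x < 5 * n)"

text \<open>(S,T)-normal decomposition of the path (gamma, ts) into ts1 ts2 ts3 ts4 ts5
(pref, up, cap, down, suff).\<close>
definition normal_decomp ::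
  "'q set \<Rightarrow> 'q trans set \<Rightarrow> ('q set \<Rightarrow> 'q trans list) \<Rightarrow> ('q set \<Rightarrow> 'q trans list) \<Rightarrow>
   'q set \<Rightarrow> 'q set \<Rightarrow> 'q conf \<Rightarrow> 'q trans list \<Rightarrow>
   'q trans list \<Rightarrow> 'q trans list \<Rightarrow> 'q trans list \<Rightarrow> 'q trans list \<Rightarrow> 'q trans list \<Rightarrow> bool" where
  "normal_decomp Q Tpos sigp sigm S T \<gamma> ts ts1 ts2 ts3 ts4 ts5 \<longleftrightarrow>
     is_scc Q Tpos S \<and> pos_enabled Tpos S \<and> is_scc Q Tpos T \<and> neg_enabled Tpos T \<and>
     ts = ts1 @ ts2 @ ts3 @ ts4 @ ts5 \<and>
     low (card Q) \<gamma> ts1 \<and>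
     low (card Q) (target \<gamma> (ts1 @ ts2 @ ts3 @ ts4)) ts5 \<and>
     (\<exists>k. ts2 = concat (replicate k (sigp S))) \<and>
     (\<exists>l. ts4 = concat (replicate l (sigm T))) \<and>
     fst (target \<gamma> (ts1 @ ts2)) = base (sigp S) \<and>
     fst (target \<gamma> (ts1 @ ts2 @ ts3)) = base (sigm T)"

definition normal_arc ::
  "'q set \<Rightarrow> 'q trans set \<Rightarrow> 'q trans set \<Rightarrow> ('q set \<Rightarrow> 'q trans list) \<Rightarrow>
   ('q set \<Rightarrow> 'q trans list) \<Rightarrow> 'q conf \<Rightarrow> 'q trans list \<Rightarrow> bool" where
  "normal_arc Q Tpos Tzero sigp sigm \<gamma> ts \<longleftrightarrow> is_arc Tpos Tzero \<gamma> ts \<and>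
     (\<exists>S T ts1 ts2 ts3 ts4 ts5. normal_decomp Q Tpos sigp sigm S T \<gamma> ts ts1 ts2 ts3 ts4 ts5)"

end

theory Submission
  imports Defs
begin

text \<open>If some arc from \<open>\<alpha>\<close> to \<open>\<beta>\<close> is not low, its counter climbs from \<open>0\<close> beyond \<open>5 n\<close> and
returns to \<open>0\<close>. By pigeonhole the climb between the levels \<open>2 n\<close> and \<open>3 n\<close> repeats a state with
a gain, and so does the descent with a loss; hence the SCCs \<open>S\<close> and \<open>T\<close> of these states are
positively and negatively enabled. Short walks lead from the climb into \<open>\<sigma>\<^sup>+\<^sub>S\<close> and from
\<open>\<sigma>\<^sup>-\<^sub>T\<close> back into the descent; pumping \<open>\<sigma>\<^sup>+\<^sub>S\<close> and \<open>\<sigma>\<^sup>-\<^sub>T\<close> suitably often keeps the counter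
positive and balances the effect, so an arc \<open>u (\<sigma>\<^sup>+\<^sub>S)\<^sup>a m (\<sigma>\<^sup>-\<^sub>T)\<^sup>b w\<close> of this shape exists with
\<open>u\<close> and \<open>w\<close> low. Among all such arcs take one minimising \<open>(length m, a + b, length u + length w)\<close>
lexicographically. A cycle in \<open>m\<close> whose effect is divisible by \<open>gcd A B\<close> could be cut out and
compensated by the pumps (Bezout); too many pumps could be shortened by \<open>lcm A B\<close> on both
sides or moved into \<open>u\<close> or \<open>w\<close>; a repeated configuration in \<open>u\<close> or \<open>w\<close> could be cut out; and a
configuration shared by \<open>u\<close> and \<open>w\<close> would yield a low arc.\<close>

fun walk :: "'q \<Rightarrow> 'q trans list \<Rightarrow> bool" where
  "walk q [] \<longleftrightarrow> True"
| "walk q (t # ts) \<longleftrightarrow> src t = q \<and> walk (tgt t) ts"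

fun walk_end :: "'q \<Rightarrow> 'q trans list \<Rightarrow> 'q" where
  "walk_end q [] = q"
| "walk_end q (t # ts) = walk_end (tgt t) ts"

abbreviation cpow :: "'a list \<Rightarrow> nat \<Rightarrow> 'a list" where
  "cpow xs k \<equiv> concat (replicate k xs)"

lemma walk_append [simp]: "walk q (xs @ ys) \<longleftrightarrow> walk q xs \<and> walk (walk_end q xs) ys"
  by (induction q xs rule: walk_end.induct) auto

lemma walk_end_append [simp]: "walk_end q (xs @ ys) = walk_end (walk_end q xs) ys"
  by (induction q xs rule: walk_end.induct) auto

lemma walk_cpow: "walk q cy \<Longrightarrow> walk_end q cy = q \<Longrightarrow> walk q (cpow cy k)"
  by (induction k) auto

lemma walk_end_cpow: "walk_end q cy = q \<Longrightarrow> walk_end q (cpow cy k) = q"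
  by (induction k) auto

lemma set_cpow_subset: "set (cpow xs k) \<subseteq> set xs"
  by (induction k) auto

lemma length_cpow [simp]: "length (cpow xs k) = k * length xs"
  by (induction k) auto

lemma walk_src_nth: "walk q ts \<Longrightarrow> i < length ts \<Longrightarrow> src (ts ! i) = walk_end q (take i ts)"
proof (induction q ts arbitrary: i rule: walk.induct)
  case (2 q t ts) then show ?case by (cases i) auto
qed simp

lemma walk_last: "walk q ts \<Longrightarrow> ts \<noteq> [] \<Longrightarrow> tgt (last ts) = walk_end q ts"
proof (induction q ts rule: walk.induct)
  case (2 q t ts) then show ?case by (cases ts) auto
qed simp

lemma walk_consistent: "walk q ts \<Longrightarrow> consistent ts"
proof (induction q ts rule: walk.induct)
  case (2 q t ts)
  then show ?case by (cases ts) (auto simp: consistent_def nth_Cons split: nat.splits)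
qed (simp add: consistent_def)

lemma consistent_walk: "consistent ts \<Longrightarrow> walk (src (hd ts)) ts"
proof (induction ts)
  case (Cons t ts)
  have "consistent ts"
    using Cons.prems unfolding consistent_def by (metis Suc_less_eq length_Cons nth_Cons_Suc)
  moreover have "ts \<noteq> [] \<Longrightarrow> tgt t = src (hd ts)"
    using Cons.prems unfolding consistent_def by (cases ts) force+
  ultimately show ?case using Cons.IH by (cases ts) auto
qed simp

lemma cycle_walk: "is_cycle Tp cy \<Longrightarrow> walk (base cy) cy \<and> walk_end (base cy) cy = base cy"
  unfolding is_cycle_def base_def using consistent_walk walk_last by metis

lemma closed_walk_is_cycle:
  "walk q ts \<Longrightarrow> set ts \<subseteq> Tp \<Longrightarrow> ts \<noteq> [] \<Longrightarrow> walk_end q ts = q \<Longrightarrow> is_cycle Tp ts"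
  unfolding is_cycle_def by (metis walk_consistent walk_last list.collapse walk.simps(2))

lemma eff_Nil [simp]: "eff [] = 0"
  by (simp add: eff_def)

lemma eff_Cons [simp]: "eff (t # ts) = deff t + eff ts"
  by (simp add: eff_def)

lemma eff_append [simp]: "eff (xs @ ys) = eff xs + eff ys"
  by (simp add: eff_def)

lemma eff_cpow [simp]: "eff (cpow cy k) = int k * eff cy"
  by (induction k) (auto simp: algebra_simps)

lemma confs_not_Nil: "confs \<gamma> ts \<noteq> []"
  by (induction \<gamma> ts rule: confs.induct) auto

lemma hd_confs: "hd (confs \<gamma> ts) = \<gamma>"
  by (induction \<gamma> ts rule: confs.induct) auto

lemma length_confs [simp]: "length (confs \<gamma> ts) = Suc (length ts)"
  by (induction \<gamma> ts rule: confs.induct) auto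

lemma target_Nil [simp]: "target \<gamma> [] = \<gamma>"
  by (simp add: target_def)

lemma target_Cons [simp]: "target (q, c) (t # ts) = target (tgt t, nat (int c + deff t)) ts"
  by (simp add: target_def confs_not_Nil)

lemma target_append: "target \<gamma> (xs @ ys) = target (target \<gamma> xs) ys"
  by (induction \<gamma> xs rule: confs.induct) auto

lemma target_take_drop: "target (target \<gamma> (take i ts)) (drop i ts) = target \<gamma> ts"
  by (metis append_take_drop_id target_append)

lemma confs_nth: "i \<le> length ts \<Longrightarrow> confs \<gamma> ts ! i = target \<gamma> (take i ts)"
proof (induction \<gamma> ts arbitrary: i rule: confs.induct)
  case (1 \<gamma>) then show ?case by simp
next
  case (2 q c t ts) then show ?case by (cases i) auto
qed

lemma set_confs: "set (confs \<gamma> ts) = {target \<gamma> (take i ts) | i. i \<le> length ts}"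
proof -
  have "set (confs \<gamma> ts) = {confs \<gamma> ts ! i | i. i \<le> length ts}"
    by (simp add: set_conv_nth less_Suc_eq_le)
  also have "\<dots> = {target \<gamma> (take i ts) | i. i \<le> length ts}"
    by (force simp: confs_nth)
  finally show ?thesis .
qed

lemma confs_append: "confs \<gamma> (xs @ ys) = butlast (confs \<gamma> xs) @ confs (target \<gamma> xs) ys"
  by (induction \<gamma> xs rule: confs.induct) (auto simp: confs_not_Nil)

lemma tl_confs_append: "tl (confs \<gamma> (xs @ ys)) = tl (confs \<gamma> xs) @ tl (confs (target \<gamma> xs) ys)"
proof -
  have xs: "confs \<gamma> xs = butlast (confs \<gamma> xs) @ [target \<gamma> xs]"
    unfolding target_def using confs_not_Nil by (rule append_butlast_last_id[symmetric])
  have ys: "confs (target \<gamma> xs) ys = target \<gamma> xs # tl (confs (target \<gamma> xs) ys)"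
    by (metis confs_not_Nil hd_confs list.collapse)
  have "tl (butlast (confs \<gamma> xs) @ confs (target \<gamma> xs) ys)
      = tl (butlast (confs \<gamma> xs) @ [target \<gamma> xs]) @ tl (confs (target \<gamma> xs) ys)"
    by (subst ys) (cases "butlast (confs \<gamma> xs)"; simp)
  then show ?thesis unfolding confs_append using xs by simp
qed

lemma set_confs_append:
  "set (confs \<gamma> (xs @ ys)) = set (confs \<gamma> xs) \<union> set (confs (target \<gamma> xs) ys)"
proof -
  have "set (confs \<gamma> xs) = set (butlast (confs \<gamma> xs)) \<union> {target \<gamma> xs}"
    unfolding target_def by (metis confs_not_Nil append_butlast_last_id set_append empty_set list.simps(15))
  moreover have "target \<gamma> xs \<in> set (confs (target \<gamma> xs) ys)"
    by (metis confs_not_Nil hd_confs hd_in_set)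
  ultimately show ?thesis unfolding confs_append by auto
qed

lemma not_distinct_confs:
  assumes "\<not> distinct (confs \<gamma> ts)"
  obtains i j where "i < j" "j \<le> length ts" "target \<gamma> (take i ts) = target \<gamma> (take j ts)"
proof -
  obtain i j where ij: "i \<le> length ts" "j \<le> length ts" "i \<noteq> j"
      "target \<gamma> (take i ts) = target \<gamma> (take j ts)"
    using assms by (auto simp: distinct_conv_nth less_Suc_eq_le confs_nth)
  show ?thesis
  proof (cases "i < j")
    case True then show ?thesis using ij by (intro that[of i j]) auto
  next
    case False then show ?thesis using ij by (intro that[of j i]) auto
  qed
qed

lemma is_path_append:
  "is_path Tp Tz \<gamma> (xs @ ys) \<longleftrightarrow> is_path Tp Tz \<gamma> xs \<and> is_path Tp Tz (target \<gamma> xs) ys"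
  by (induction \<gamma> xs rule: confs.induct) auto

lemma is_path_walk: "is_path Tp Tz (q, c) ts \<Longrightarrow> walk q ts"
  by (induction "(q, c)" ts arbitrary: q c rule: confs.induct) auto

lemma is_path_without_zero_tests: "is_path Tp {} \<gamma> ts \<Longrightarrow> is_path Tp Tz \<gamma> ts"
  by (induction \<gamma> ts rule: confs.induct) auto

lemma low_append: "low k \<gamma> (xs @ ys) \<longleftrightarrow> low k \<gamma> xs \<and> low k (target \<gamma> xs) ys"
  unfolding low_def set_confs_append by auto

lemma set_tl_conv_nth: "set (tl xs) = {xs ! l | l. 0 < l \<and> l < length xs}"
  by (cases xs) (auto simp: set_conv_nth, metis Suc_less_eq gr0_conv_Suc nth_Cons_Suc)

definition stays_positive :: "'q conf \<Rightarrow> 'q trans list \<Rightarrow> bool" where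
  "stays_positive \<gamma> ts \<longleftrightarrow> (\<forall>x \<in> set (tl (confs \<gamma> ts)). 0 < snd x)"

lemma stays_positive_append:
  "stays_positive \<gamma> (xs @ ys) \<longleftrightarrow> stays_positive \<gamma> xs \<and> stays_positive (target \<gamma> xs) ys"
  unfolding stays_positive_def tl_confs_append by (simp only: set_append ball_Un)

lemma stays_positive_iff:
  "stays_positive \<gamma> ts \<longleftrightarrow> (\<forall>l. 0 < l \<and> l \<le> length ts \<longrightarrow> 0 < snd (target \<gamma> (take l ts)))"
proof -
  have "set (tl (confs \<gamma> ts)) = (\<lambda>l. target \<gamma> (take l ts)) ` {0<..length ts}"
    by (auto simp: set_tl_conv_nth image_iff confs_nth less_Suc_eq_le) (metis confs_nth)
  then show ?thesis unfolding stays_positive_def by auto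
qed

lemma splice_compositional:
  fixes P :: "'q conf \<Rightarrow> 'q trans list \<Rightarrow> bool"
  assumes P_append: "\<And>\<gamma> xs ys. P \<gamma> (xs @ ys) \<longleftrightarrow> P \<gamma> xs \<and> P (target \<gamma> xs) ys"
    and "P \<gamma> xs" "P \<delta> ys" "target \<gamma> (take i xs) = target \<delta> (take j ys)"
  shows "P \<gamma> (take i xs @ drop j ys)"
  using assms P_append[of \<gamma> "take i xs" "drop i xs"] P_append[of \<delta> "take j ys" "drop j ys"]
  by simp

lemma target_splice:
  "target \<gamma> (take i xs) = target \<delta> (take j ys) \<Longrightarrow> target \<gamma> (take i xs @ drop j ys) = target \<delta> ys"
  by (simp add: target_append target_take_drop)

section \<open>Pigeonhole and arithmetic\<close>

lemma first_hit:
  fixes f :: "nat \<Rightarrow> int"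
  assumes step: "\<And>i. i < L \<Longrightarrow> \<bar>f (Suc i) - f i\<bar> \<le> 1" and "f 0 \<le> k" "k \<le> f L"
  defines "h \<equiv> LEAST l. k \<le> f l"
  shows "h \<le> L" "f h = k" "\<And>l. l < h \<Longrightarrow> f l < k"
proof -
  show le: "h \<le> L" unfolding h_def using assms(3) by (rule Least_le)
  have ge: "k \<le> f h" unfolding h_def using assms(3) by (rule LeastI)
  show below: "\<And>l. l < h \<Longrightarrow> f l < k" unfolding h_def using not_less_Least by force
  have "f h \<le> k"
  proof (cases h)
    case (Suc m)
    then show ?thesis using below[of m] step[of m] le by simp
  qed (use assms(2) in simp)
  then show "f h = k" using ge by simp
qed

lemma climb_repeats_state:
  fixes f :: "nat \<Rightarrow> int" and st :: "nat \<Rightarrow> 'a" and n L :: nat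
  assumes step: "\<And>i. i < L \<Longrightarrow> \<bar>f (Suc i) - f i\<bar> \<le> 1"
    and start: "f 0 \<le> 2 * int n" and top: "3 * int n \<le> f L"
    and states: "\<And>i. i \<le> L \<Longrightarrow> st i \<in> S" "finite S" "card S \<le> n"
  obtains i j where "i < j" "j \<le> L" "st i = st j" "f i < f j"
    "2 * int n \<le> f i" "f i \<le> 3 * int n" "\<And>l. l \<le> i \<Longrightarrow> f l \<le> f i"
proof -
  define K where "K = {2 * int n..3 * int n}"
  define hit where "hit k = (LEAST l. k \<le> f l)" for k
  have hit: "hit k \<le> L" "f (hit k) = k" "\<And>l. l < hit k \<Longrightarrow> f l < k" if "k \<in> K" for k
  proof -
    have "f 0 \<le> k" "k \<le> f L" using that start top by (auto simp: K_def)
    then show "hit k \<le> L" "f (hit k) = k" "\<And>l. l < hit k \<Longrightarrow> f l < k"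
      using first_hit[of L f, OF step] unfolding hit_def by blast+
  qed
  have hit_mono: "hit k < hit k'" if "k \<in> K" "k' \<in> K" "k < k'" for k k'
  proof -
    have "hit k \<le> hit k'"
      unfolding hit_def[of k] using hit(2)[OF that(2)] that(3) by (intro Least_le) simp
    moreover have "hit k \<noteq> hit k'" using hit(2)[OF that(1)] hit(2)[OF that(2)] that(3) by auto
    ultimately show ?thesis by simp
  qed
  have "\<not> inj_on (st \<circ> hit) K"
  proof
    assume "inj_on (st \<circ> hit) K"
    moreover have "(st \<circ> hit) ` K \<subseteq> S" using hit(1) states(1) by auto
    ultimately have "card K \<le> card S" using card_inj_on_le states(2) by blast
    then show False using states(3) by (simp add: K_def)
  qed
  then obtain k k' where k: "k \<in> K" "k' \<in> K" "k < k'" "st (hit k) = st (hit k')"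
    unfolding inj_on_def comp_def by (metis linorder_neqE)
  show ?thesis
  proof (rule that)
    show "hit k < hit k'" by (rule hit_mono[OF k(1-3)])
    show "hit k' \<le> L" by (rule hit(1)[OF k(2)])
    show "f (hit k) < f (hit k')" "2 * int n \<le> f (hit k)" "f (hit k) \<le> 3 * int n"
      using hit(2)[OF k(1)] hit(2)[OF k(2)] k by (auto simp: K_def)
    show "f l \<le> f (hit k)" if "l \<le> hit k" for l
    proof (cases "l = hit k")
      case False
      then have "f l < k" using hit(3)[OF k(1)] that by simp
      then show ?thesis using hit(2)[OF k(1)] by simp
    qed simp
  qed (rule k(4))
qed

lemma gcd_multiple_as_difference:
  fixes A B :: nat and e :: int
  assumes "0 < A" "0 < B" "int (gcd A B) dvd e"
  obtains x y :: nat where "int x * int A - int y * int B = e"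
proof -
  obtain r where r: "e = int (gcd A B) * r" using assms(3) by (auto elim: dvdE)
  show ?thesis
  proof (cases "0 \<le> r")
    case True
    obtain x y where "A * x = B * y + gcd A B" using bezout_nat assms(1) by blast
    then have "int x * int A - int y * int B = int (gcd A B)"
      by (metis add_diff_cancel_left' mult.commute of_nat_add of_nat_mult)
    then show ?thesis using r True
      by (intro that[of "x * nat r" "y * nat r"]) (simp add: algebra_simps flip: left_diff_distrib)
  next
    case False
    obtain x y where "B * x = A * y + gcd B A" using bezout_nat assms(2) by blast
    then have "int B * int x = int A * int y + int (gcd A B)"
      by (metis gcd.commute of_nat_add of_nat_mult)
    then have eq: "int y * int A - int x * int B = - int (gcd A B)"
      by (simp add: algebra_simps)
    have "int (y * nat (- r)) * int A - int (x * nat (- r)) * int B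
        = - r * (int y * int A - int x * int B)"
      using False by (simp add: algebra_simps)
    also have "\<dots> = e" unfolding eq r by simp
    finally show ?thesis by (rule that)
  qed
qed

text \<open>\<open>x\<close> pumps of a cycle of effect \<open>A\<close> and \<open>y\<close> pumps of a cycle of effect \<open>-B\<close> compensate
\<open>A * B\<close> traversals of a closed walk of effect \<open>-e\<close>, while each pump changes the counter by at
least \<open>K * A * B\<close>.\<close>

lemma pumping_balance:
  fixes A B K :: nat and e :: int
  obtains x y :: nat where "int (x * A) - int (y * B) = int (A * B) * e"
    "K * (A * B) \<le> x * A" "K * (A * B) \<le> y * B"
proof
  let ?x = "K * B + B * nat e" and ?y = "K * A + A * nat (- e)"
  show "int (?x * A) - int (?y * B) = int (A * B) * e"
    by (cases "0 \<le> e") (simp_all add: algebra_simps)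
  show "K * (A * B) \<le> ?x * A" "K * (A * B) \<le> ?y * B"
    by (simp_all add: algebra_simps)
qed

lemma lcm_quotients:
  fixes A B :: nat
  assumes "0 < A" "0 < B"
  shows "lcm A B div A * A = lcm A B" "lcm A B div B * B = lcm A B"
    "0 < lcm A B div A" "0 < lcm A B div B" "A \<le> lcm A B" "B \<le> lcm A B"
proof -
  have "0 < lcm A B" using assms by (simp add: lcm_pos_nat)
  moreover show "lcm A B div A * A = lcm A B" "lcm A B div B * B = lcm A B" by simp_all
  ultimately show "0 < lcm A B div A" "0 < lcm A B div B" by (metis gr0I mult_zero_left)+
  show "A \<le> lcm A B" "B \<le> lcm A B" using \<open>0 < lcm A B\<close> by (simp_all add: dvd_imp_le)
qed

lemma length_cpow_le:
  assumes "length xs < n" "length ys < n" "length zs < n" "1 \<le> M"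
  shows "length (cpow (xs @ ys) (M - 1)) + length zs + n \<le> 2 * n * M"
proof -
  have "(M - 1) * (length xs + length ys) \<le> (M - 1) * (2 * n)"
    using assms(1,2) by (intro mult_le_mono2) linarith
  moreover have "(M - 1) * (2 * n) + 2 * n = 2 * n * M" using assms(4) by (cases M) auto
  moreover have "length (cpow (xs @ ys) (M - 1)) = (M - 1) * (length xs + length ys)" by simp
  ultimately show ?thesis using assms(3) by linarith
qed

locale ocs =
  fixes Q :: "'q set" and Tpos Tzero :: "'q trans set"
  assumes wf: "wf_ocs Q Tpos Tzero"
begin

text \<open>Paths without zero tests, i.e. with positive counter before every step
(\<open>pos_path_iff\<close>).\<close>

abbreviation pos_path :: "'q conf \<Rightarrow> 'q trans list \<Rightarrow> bool" where
  "pos_path \<equiv> is_path Tpos {}"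

lemma finite_Q: "finite Q"
  using wf by (simp add: wf_ocs_def)

lemma Tpos_bounds: "t \<in> Tpos \<Longrightarrow> -1 \<le> deff t \<and> deff t \<le> 1 \<and> src t \<in> Q \<and> tgt t \<in> Q"
  using wf by (auto simp: wf_ocs_def deff_def src_def tgt_def)

lemma Tzero_bounds: "t \<in> Tzero \<Longrightarrow> 0 \<le> deff t \<and> deff t \<le> 1 \<and> src t \<in> Q \<and> tgt t \<in> Q"
  using wf by (auto simp: wf_ocs_def deff_def src_def tgt_def)

lemma path_trans: "is_path Tpos Tzero \<gamma> ts \<Longrightarrow> set ts \<subseteq> Tpos \<union> Tzero"
  by (induction \<gamma> ts rule: confs.induct) auto

lemma path_target:
  "is_path Tpos Tzero (q, c) ts \<Longrightarrow>
     target (q, c) ts = (walk_end q ts, nat (int c + eff ts)) \<and> 0 \<le> int c + eff ts"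
proof (induction ts arbitrary: q c)
  case (Cons t ts)
  from Cons.prems have p: "is_path Tpos Tzero (tgt t, nat (int c + deff t)) ts" by simp
  have e: "int (nat (int c + deff t)) = int c + deff t"
    using Cons.prems Tpos_bounds Tzero_bounds by fastforce
  from Cons.IH[OF p] e show ?case by (simp add: add.assoc)
qed simp

lemma pos_path_target:
  "pos_path (q, c) ts \<Longrightarrow>
     target (q, c) ts = (walk_end q ts, nat (int c + eff ts)) \<and> 0 \<le> int c + eff ts"
  using path_target is_path_without_zero_tests by blast

lemma eff_bounded_by_length:
  "set ts \<subseteq> Tpos \<Longrightarrow> - int (length ts) \<le> eff ts \<and> eff ts \<le> int (length ts)"
proof (induction ts)
  case (Cons t ts) then show ?case using Tpos_bounds[of t] by auto
qed simp

lemma pos_path_iff: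
  "pos_path (q, c) ts \<longleftrightarrow>
     walk q ts \<and> set ts \<subseteq> Tpos \<and> (\<forall>i < length ts. 0 < int c + eff (take i ts))"
proof (induction ts arbitrary: q c)
  case (Cons t ts)
  show ?case
  proof
    assume L: "pos_path (q, c) (t # ts)"
    hence t: "src t = q" "t \<in> Tpos" "0 < c" and r: "pos_path (tgt t, nat (int c + deff t)) ts"
      by auto
    have "int (nat (int c + deff t)) = int c + deff t" using Tpos_bounds[OF t(2)] t(3) by simp
    with r Cons.IH have "walk (tgt t) ts \<and> set ts \<subseteq> Tpos \<and>
        (\<forall>i < length ts. 0 < int c + deff t + eff (take i ts))"
      by (simp add: add.assoc)
    then show "walk q (t # ts) \<and> set (t # ts) \<subseteq> Tpos \<and>
        (\<forall>i < length (t # ts). 0 < int c + eff (take i (t # ts)))"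
      using t by (auto simp: less_Suc_eq_0_disj add.assoc)
  next
    assume R: "walk q (t # ts) \<and> set (t # ts) \<subseteq> Tpos \<and>
        (\<forall>i < length (t # ts). 0 < int c + eff (take i (t # ts)))"
    hence t: "src t = q" "t \<in> Tpos" "walk (tgt t) ts" "set ts \<subseteq> Tpos" by auto
    from R have c0: "0 < int c" by (metis eff_Nil length_Cons take0 zero_less_Suc add_0_right)
    have "int (nat (int c + deff t)) = int c + deff t" using Tpos_bounds[OF t(2)] c0 by simp
    moreover have "\<forall>i < length ts. 0 < int c + deff t + eff (take i ts)"
    proof (intro allI impI)
      fix i assume "i < length ts"
      then have "0 < int c + eff (take (Suc i) (t # ts))" using R by (metis Suc_less_eq length_Cons)
      then show "0 < int c + deff t + eff (take i ts)" by (simp add: add.assoc)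
    qed
    ultimately have "pos_path (tgt t, nat (int c + deff t)) ts"
      using Cons.IH t by (simp add: add.assoc)
    then show "pos_path (q, c) (t # ts)" using t c0 by simp
  qed
qed simp

lemma pos_path_if_high_start:
  assumes "walk q ts" "set ts \<subseteq> Tpos" "length ts < c"
  shows "pos_path (q, c) ts"
  unfolding pos_path_iff
proof (intro conjI allI impI)
  fix i assume "i < length ts"
  moreover have "set (take i ts) \<subseteq> Tpos" using assms(2) by (meson order.trans set_take_subset)
  ultimately show "0 < int c + eff (take i ts)"
    using eff_bounded_by_length[of "take i ts"] assms(3) by auto
qed (use assms in auto)

lemma pos_path_if_high_end:
  assumes "walk q ts" "set ts \<subseteq> Tpos" "int (length ts) < int c + eff ts"
  shows "pos_path (q, c) ts"
  unfolding pos_path_iff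
proof (intro conjI allI impI)
  fix i assume "i < length ts"
  moreover have "set (drop i ts) \<subseteq> Tpos" using assms(2) by (meson order.trans set_drop_subset)
  then have "eff (drop i ts) \<le> int (length ts - i)" using eff_bounded_by_length[of "drop i ts"] by auto
  moreover have "eff ts = eff (take i ts) + eff (drop i ts)"
    by (metis append_take_drop_id eff_append)
  ultimately show "0 < int c + eff (take i ts)" using assms(3) by auto
qed (use assms in auto)

lemma pos_path_mono: "pos_path (q, c) ts \<Longrightarrow> c \<le> c' \<Longrightarrow> pos_path (q, c') ts"
  unfolding pos_path_iff by force

lemma pos_path_take: "pos_path \<gamma> ts \<Longrightarrow> pos_path \<gamma> (take j ts)"
  by (metis append_take_drop_id is_path_append)

lemma pos_path_cpow:
  assumes "walk q cy" "walk_end q cy = q" "set cy \<subseteq> Tpos"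
    and "length cy < c" "int (length cy) < int c + int k * eff cy"
  shows "pos_path (q, c) (cpow cy k)"
  using assms(4,5)
proof (induction k arbitrary: c)
  case (Suc k)
  have p1: "pos_path (q, c) cy" using pos_path_if_high_start assms(1,3) Suc.prems by blast
  have t1: "target (q, c) cy = (q, nat (int c + eff cy))"
    using pos_path_target[OF p1] assms(2) by simp
  have l1: "int (length cy) < int c + eff cy"
  proof (cases "eff cy \<ge> 0")
    case False
    then have "int (Suc k) * eff cy \<le> eff cy" by (simp add: mult_le_cancel_right1)
    then show ?thesis using Suc.prems by simp
  qed (use Suc.prems in simp)
  then have "pos_path (q, nat (int c + eff cy)) (cpow cy k)"
    using Suc.IH[of "nat (int c + eff cy)"] Suc.prems by (simp add: algebra_simps)
  then show ?case using p1 t1 by (simp add: is_path_append)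
qed simp

lemma pos_path_stays_positive:
  assumes "pos_path \<gamma> ts" "0 < snd (target \<gamma> ts)"
  shows "stays_positive \<gamma> ts"
  unfolding stays_positive_iff
proof (intro allI impI)
  fix l assume l: "0 < l \<and> l \<le> length ts"
  obtain q c where \<gamma>: "\<gamma> = (q, c)" by fastforce
  show "0 < snd (target \<gamma> (take l ts))"
  proof (cases "l < length ts")
    case True
    then have "0 < int c + eff (take l ts)" using assms(1) \<gamma> by (simp add: pos_path_iff)
    then show ?thesis using pos_path_target[OF pos_path_take[OF assms(1)[unfolded \<gamma>]]] \<gamma> by simp
  qed (use assms l in simp)
qed

lemma low_if_short:
  assumes "pos_path (q, c) ts" "c + length ts < 5 * k"
  shows "low k (q, c) ts"
  unfolding low_def
proof
  fix x assume "x \<in> set (confs (q, c) ts)"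
  then obtain l where l: "l \<le> length ts" and x: "x = target (q, c) (take l ts)"
    unfolding set_confs by blast
  have "set (take l ts) \<subseteq> Tpos"
    using assms(1) by (meson order.trans set_take_subset pos_path_iff)
  then have "eff (take l ts) \<le> int l" using eff_bounded_by_length[of "take l ts"] l by simp
  then show "snd x < 5 * k"
    using pos_path_target[OF pos_path_take[OF assms(1)]] assms(2) l x by simp
qed

lemma short_walk_pos_path:
  assumes "walk q P" "set P \<subseteq> Tpos" "length P < c"
  shows "pos_path (q, c) P" "stays_positive (q, c) P"
    "target (q, c) P = (walk_end q P, nat (int c + eff P))"
    "c + length P < 5 * k \<Longrightarrow> low k (q, c) P"
proof -
  show p: "pos_path (q, c) P" using pos_path_if_high_start[OF assms] .
  show t: "target (q, c) P = (walk_end q P, nat (int c + eff P))" using pos_path_target[OF p] by simp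
  have "0 < int c + eff P" using eff_bounded_by_length[OF assms(2)] assms(3) by linarith
  then show "stays_positive (q, c) P" using pos_path_stays_positive[OF p] t by simp
  show "c + length P < 5 * k \<Longrightarrow> low k (q, c) P" using low_if_short[OF p] by simp
qed

lemma pos_path_between_walks:
  assumes X: "walk q X" "set X \<subseteq> Tpos" "walk_end q X = s" "length X < c"
    and Z: "pos_path (s, k) Z" "int k \<le> int c + eff X"
    and Y: "walk (walk_end s Z) Y" "set Y \<subseteq> Tpos" "int (length Y) < int c + eff (X @ Z @ Y)"
  shows "pos_path (q, c) (X @ Z @ Y)"
    "target (q, c) (X @ Z @ Y) = (walk_end (walk_end s Z) Y, nat (int c + eff (X @ Z @ Y)))"
proof -
  have pX: "pos_path (q, c) X" and tX: "target (q, c) X = (s, nat (int c + eff X))"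
    using short_walk_pos_path[OF X(1,2,4)] X(3) by simp_all
  have "k \<le> nat (int c + eff X)" using Z(2) by linarith
  then have pZ: "pos_path (s, nat (int c + eff X)) Z" using pos_path_mono[OF Z(1)] by blast
  have "0 \<le> int c + eff X" using Z(2) by linarith
  then have tZ: "target (s, nat (int c + eff X)) Z = (walk_end s Z, nat (int c + eff X + eff Z))"
    and nonneg: "0 \<le> int c + eff X + eff Z"
    using pos_path_target[OF pZ] by simp_all
  have "int (length Y) < int (nat (int c + eff X + eff Z)) + eff Y" using Y(3) by simp
  then have pY: "pos_path (walk_end s Z, nat (int c + eff X + eff Z)) Y"
    using pos_path_if_high_end[OF Y(1,2)] by blast
  show "pos_path (q, c) (X @ Z @ Y)" using pX tX pZ tZ pY by (simp add: is_path_append)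
  show "target (q, c) (X @ Z @ Y) = (walk_end (walk_end s Z) Y, nat (int c + eff (X @ Z @ Y)))"
    using tX tZ pos_path_target[OF pY] nonneg by (simp add: target_append add.assoc)
qed

lemma pos_path_if_positive:
  "is_path Tpos Tzero \<gamma> ts \<Longrightarrow> \<forall>j < length ts. 0 < snd (target \<gamma> (take j ts)) \<Longrightarrow> pos_path \<gamma> ts"
proof (induction \<gamma> ts rule: confs.induct)
  case (2 q c t ts)
  have "\<forall>j < length ts. 0 < snd (target (tgt t, nat (int c + deff t)) (take j ts))"
  proof (intro allI impI)
    fix j assume "j < length ts"
    then have "0 < snd (target (q, c) (take (Suc j) (t # ts)))"
      using "2.prems"(2) by (metis Suc_less_eq length_Cons)
    then show "0 < snd (target (tgt t, nat (int c + deff t)) (take j ts))" by simp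
  qed
  moreover have "0 < c" using "2.prems"(2) by force
  ultimately show ?case using 2 by auto
qed simp

lemma arc_intro:
  assumes "is_path Tpos Tzero \<alpha> xs" "snd \<alpha> = 0" "stays_positive \<alpha> xs"
    "pos_path (target \<alpha> xs) ys" "snd (target \<alpha> (xs @ ys)) = 0"
  shows "is_arc Tpos Tzero \<alpha> (xs @ ys)"
  unfolding is_arc_def
proof (intro conjI allI impI)
  show "is_path Tpos Tzero \<alpha> (xs @ ys)"
    using assms(1,4) is_path_without_zero_tests by (simp add: is_path_append)
  fix i assume i: "0 < i \<and> i < length (xs @ ys)"
  show "0 < snd (confs \<alpha> (xs @ ys) ! i)"
  proof (cases "i \<le> length xs")
    case True
    then show ?thesis using assms(3) i by (simp add: confs_nth stays_positive_iff)
  next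
    case False
    obtain q c where qc: "target \<alpha> xs = (q, c)" by fastforce
    define j where "j = i - length xs"
    have "j < length ys" using i False by (simp add: j_def)
    then have "0 < int c + eff (take j ys)" using assms(4) qc by (simp add: pos_path_iff)
    moreover have "target \<alpha> (take i (xs @ ys)) = target (q, c) (take j ys)"
      using False qc by (simp add: j_def target_append)
    ultimately show ?thesis
      using i pos_path_target[OF pos_path_take[OF assms(4)[unfolded qc]]] by (simp add: confs_nth)
  qed
qed (use assms in auto)

lemma arc_suffix_pos_path:
  assumes "is_arc Tpos Tzero \<alpha> ts" "0 < i"
  shows "pos_path (target \<alpha> (take i ts)) (drop i ts)"
proof (rule pos_path_if_positive)
  show "is_path Tpos Tzero (target \<alpha> (take i ts)) (drop i ts)"
    using assms(1) unfolding is_arc_def by (metis append_take_drop_id is_path_append)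
  show "\<forall>j < length (drop i ts). 0 < snd (target (target \<alpha> (take i ts)) (take j (drop i ts)))"
  proof (intro allI impI)
    fix j assume j: "j < length (drop i ts)"
    have "target (target \<alpha> (take i ts)) (take j (drop i ts)) = confs \<alpha> ts ! (i + j)"
      using j by (simp add: target_append[symmetric] take_add confs_nth)
    then show "0 < snd (target (target \<alpha> (take i ts)) (take j (drop i ts)))"
      using assms j unfolding is_arc_def by auto
  qed
qed

lemma walk_end_in_Q: "walk q ts \<Longrightarrow> q \<in> Q \<Longrightarrow> set ts \<subseteq> Tpos \<union> Tzero \<Longrightarrow> walk_end q ts \<in> Q"
  by (induction q ts rule: walk.induct) (auto dest: Tpos_bounds Tzero_bounds)

lemma walk_reachable: "walk q ts \<Longrightarrow> set ts \<subseteq> Tpos \<Longrightarrow> (q, walk_end q ts) \<in> (edges Tpos)\<^sup>*"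
proof (induction q ts rule: walk.induct)
  case (2 q t ts)
  then have "(q, tgt t) \<in> edges Tpos" by (cases t) (auto simp: edges_def src_def tgt_def)
  then show ?case using 2 by (simp add: converse_rtrancl_into_rtrancl)
qed simp

lemma walk_state_repeats:
  assumes "walk q ts" "q \<in> Q" "set ts \<subseteq> Tpos \<union> Tzero" "card Q \<le> length ts"
  obtains i j where "i < j" "j \<le> length ts" "walk_end q (take i ts) = walk_end q (take j ts)"
proof -
  let ?st = "\<lambda>i. walk_end q (take i ts)"
  have "?st ` {0..length ts} \<subseteq> Q"
  proof clarify
    fix i
    have "walk q (take i ts)" using assms(1) by (metis append_take_drop_id walk_append)
    moreover have "set (take i ts) \<subseteq> Tpos \<union> Tzero" using assms(3) by (meson order.trans set_take_subset)
    ultimately show "?st i \<in> Q" using walk_end_in_Q assms(2) by blast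
  qed
  then have "\<not> inj_on ?st {0..length ts}"
    using card_inj_on_le[OF _ _ finite_Q] assms(4) by fastforce
  then obtain i j where ij: "i \<le> length ts" "j \<le> length ts" "i \<noteq> j" "?st i = ?st j"
    unfolding inj_on_def by auto
  show ?thesis
  proof (cases "i < j")
    case True then show ?thesis using ij that[of i j] by auto
  next
    case False then show ?thesis using ij that[of j i] by auto
  qed
qed

lemma short_walk:
  assumes "(p, q) \<in> (edges Tpos)\<^sup>*" "p \<in> Q"
  obtains P where "walk p P" "set P \<subseteq> Tpos" "walk_end p P = q" "length P < card Q"
proof -
  define is_walk where "is_walk P \<longleftrightarrow> walk p P \<and> set P \<subseteq> Tpos \<and> walk_end p P = q" for P
  have "\<exists>P. walk p P \<and> set P \<subseteq> Tpos \<and> walk_end p P = q" using assms(1)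
  proof (induction rule: rtrancl_induct)
    case base show ?case by (rule exI[of _ "[]"]) simp
  next
    case (step y z)
    then obtain P d where "walk p P" "set P \<subseteq> Tpos" "walk_end p P = y" "(y, d, z) \<in> Tpos"
      by (auto simp: edges_def)
    then have "walk p (P @ [(y, d, z)]) \<and> set (P @ [(y, d, z)]) \<subseteq> Tpos \<and> walk_end p (P @ [(y, d, z)]) = z"
      by (auto simp: src_def tgt_def)
    then show ?case by blast
  qed
  then have "\<exists>P. is_walk P" unfolding is_walk_def .
  then obtain P where P: "is_walk P" and shortest: "\<And>P'. is_walk P' \<Longrightarrow> length P \<le> length P'"
    using ex_has_least_nat[of is_walk _ length] by blast
  have "length P < card Q"
  proof (rule ccontr)
    assume "\<not> length P < card Q"
    then obtain i j where ij: "i < j" "j \<le> length P" "walk_end p (take i P) = walk_end p (take j P)"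
      using walk_state_repeats[of p P] P assms(2) unfolding is_walk_def by auto
    have "walk p (take k P) \<and> walk (walk_end p (take k P)) (drop k P) \<and>
        walk_end (walk_end p (take k P)) (drop k P) = q" for k
      using P unfolding is_walk_def by (metis append_take_drop_id walk_append walk_end_append)
    then have "is_walk (take i P @ drop j P)"
      using P ij(3) unfolding is_walk_def by (auto dest: in_set_takeD in_set_dropD)
    then show False using shortest ij by fastforce
  qed
  then show ?thesis using that P unfolding is_walk_def by blast
qed

definition scc_of :: "'q \<Rightarrow> 'q set" where
  "scc_of s = {q \<in> Q. (s, q) \<in> (edges Tpos)\<^sup>* \<and> (q, s) \<in> (edges Tpos)\<^sup>*}"

lemma closed_walk_scc:
  assumes "walk s C" "set C \<subseteq> Tpos" "C \<noteq> []" "walk_end s C = s" "s \<in> Q"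
  shows "is_cycle Tpos C" "cycle_in C (scc_of s)" "is_scc Q Tpos (scc_of s)"
proof -
  show "is_cycle Tpos C" using closed_walk_is_cycle assms(1-4) .
  have src_in: "src (C ! p) \<in> scc_of s" if "p < length C" for p
  proof -
    have x: "src (C ! p) = walk_end s (take p C)" using walk_src_nth[OF assms(1) that] .
    have w1: "walk s (take p C)" and w2: "walk (src (C ! p)) (drop p C)"
      using assms(1) x by (metis append_take_drop_id walk_append)+
    have s1: "set (take p C) \<subseteq> Tpos" "set (drop p C) \<subseteq> Tpos"
      using assms(2) by (meson order.trans set_take_subset set_drop_subset)+
    have "(s, src (C ! p)) \<in> (edges Tpos)\<^sup>*" using walk_reachable[OF w1 s1(1)] x by simp
    moreover have "walk_end (src (C ! p)) (drop p C) = s"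
      using assms(4) x by (metis append_take_drop_id walk_end_append)
    then have "(src (C ! p), s) \<in> (edges Tpos)\<^sup>*" using walk_reachable[OF w2 s1(2)] by simp
    moreover have "src (C ! p) \<in> Q" using walk_end_in_Q[OF w1 assms(5)] s1 x by auto
    ultimately show ?thesis by (simp add: scc_of_def)
  qed
  show "cycle_in C (scc_of s)" unfolding cycle_in_def
  proof
    fix x assume "x \<in> set (map src C)"
    then obtain p where "p < length C" "x = src (C ! p)" by (auto simp: in_set_conv_nth)
    then show "x \<in> scc_of s" using src_in by simp
  qed
  show "is_scc Q Tpos (scc_of s)" using assms(5) by (auto simp: is_scc_def scc_of_def)
qed

lemma simple_cycle_walk:
  assumes "simple_cycle Tpos cy"
  shows "walk (base cy) cy" "walk_end (base cy) cy = base cy" "set cy \<subseteq> Tpos"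
    "length cy \<le> card Q" "base cy \<in> set (map src cy)"
proof -
  have cy: "is_cycle Tpos cy" "distinct (map src cy)" using assms by (auto simp: simple_cycle_def)
  then show "walk (base cy) cy" "walk_end (base cy) cy = base cy" using cycle_walk by blast+
  show Tpos: "set cy \<subseteq> Tpos" using cy(1) by (simp add: is_cycle_def)
  have "set (map src cy) \<subseteq> Q" using Tpos Tpos_bounds by auto
  then show "length cy \<le> card Q"
    using card_mono[OF finite_Q] distinct_card[OF cy(2)] by (metis length_map)
  show "base cy \<in> set (map src cy)" using cy(1) by (cases cy) (auto simp: is_cycle_def base_def)
qed

end

section \<open>Candidates for normal arcs\<close>

abbreviation lex3 :: "((nat \<times> nat \<times> nat) \<times> nat \<times> nat \<times> nat) set" where
  "lex3 \<equiv> less_than <*lex*> less_than <*lex*> less_than"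

definition candidate_size ::
  "'q trans list \<Rightarrow> nat \<Rightarrow> 'q trans list \<Rightarrow> nat \<Rightarrow> 'q trans list \<Rightarrow> nat \<times> nat \<times> nat" where
  "candidate_size u a m b w = (length m, a + b, length u + length w)"

locale high_arcs = ocs Q Tpos Tzero for Q :: "'q set" and Tpos Tzero +
  fixes sigp sigm :: "'q set \<Rightarrow> 'q trans list" and \<alpha> \<beta> :: "'q conf"
  assumes good_choice: "good_choice Q Tpos sigp sigm"
    and \<alpha>_in_Q: "fst \<alpha> \<in> Q" and \<alpha>_zero: "snd \<alpha> = 0" and \<beta>_zero: "snd \<beta> = 0"
    and no_low_arc: "\<not> (\<exists>ts. is_arc Tpos Tzero \<alpha> ts \<and> target \<alpha> ts = \<beta> \<and> low (card Q) \<alpha> ts)"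
begin

abbreviation n :: nat where "n \<equiv> card Q"

lemma n_pos: "1 \<le> n"
  using \<alpha>_in_Q finite_Q by (metis One_nat_def Suc_leI card_gt_0_iff empty_iff)

lemma up_cycle:
  assumes "is_scc Q Tpos S" "pos_enabled Tpos S"
  shows "walk (base (sigp S)) (sigp S)" "walk_end (base (sigp S)) (sigp S) = base (sigp S)"
    "set (sigp S) \<subseteq> Tpos" "length (sigp S) \<le> n" "0 < eff (sigp S)" "base (sigp S) \<in> S"
proof -
  have "simple_cycle Tpos (sigp S)" "cycle_in (sigp S) S" "0 < eff (sigp S)"
    using good_choice assms unfolding good_choice_def by blast+
  then show "walk (base (sigp S)) (sigp S)" "walk_end (base (sigp S)) (sigp S) = base (sigp S)"
    "set (sigp S) \<subseteq> Tpos" "length (sigp S) \<le> n" "0 < eff (sigp S)" "base (sigp S) \<in> S"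
    using simple_cycle_walk[of "sigp S"] unfolding cycle_in_def by blast+
qed

lemma down_cycle:
  assumes "is_scc Q Tpos T" "neg_enabled Tpos T"
  shows "walk (base (sigm T)) (sigm T)" "walk_end (base (sigm T)) (sigm T) = base (sigm T)"
    "set (sigm T) \<subseteq> Tpos" "length (sigm T) \<le> n" "eff (sigm T) < 0" "base (sigm T) \<in> T"
proof -
  have "simple_cycle Tpos (sigm T)" "cycle_in (sigm T) T" "eff (sigm T) < 0"
    using good_choice assms unfolding good_choice_def by blast+
  then show "walk (base (sigm T)) (sigm T)" "walk_end (base (sigm T)) (sigm T) = base (sigm T)"
    "set (sigm T) \<subseteq> Tpos" "length (sigm T) \<le> n" "eff (sigm T) < 0" "base (sigm T) \<in> T"
    using simple_cycle_walk[of "sigm T"] unfolding cycle_in_def by blast+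
qed

text \<open>A candidate encodes the arc \<open>u (\<sigma>\<^sup>+\<^sub>S)\<^sup>a m (\<sigma>\<^sup>-\<^sub>T)\<^sup>b w\<close> from \<open>\<alpha>\<close> to \<open>\<beta>\<close> (see
\<open>candidate_arc\<close>) passing through \<open>(base \<sigma>\<^sup>+\<^sub>S, c1)\<close>, \<open>(base \<sigma>\<^sup>+\<^sub>S, c2)\<close>, \<open>(base \<sigma>\<^sup>-\<^sub>T, c3)\<close> and
\<open>(base \<sigma>\<^sup>-\<^sub>T, c4)\<close>.\<close>

definition candidate ::
  "'q set \<Rightarrow> 'q set \<Rightarrow> 'q trans list \<Rightarrow> nat \<Rightarrow> 'q trans list \<Rightarrow> nat \<Rightarrow> 'q trans list \<Rightarrow>
   nat \<Rightarrow> nat \<Rightarrow> nat \<Rightarrow> nat \<Rightarrow> bool" where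
  "candidate S T u a m b w c1 c2 c3 c4 \<longleftrightarrow>
     is_scc Q Tpos S \<and> pos_enabled Tpos S \<and> is_scc Q Tpos T \<and> neg_enabled Tpos T \<and>
     is_path Tpos Tzero \<alpha> u \<and> stays_positive \<alpha> u \<and> low n \<alpha> u \<and>
     target \<alpha> u = (base (sigp S), c1) \<and> n < c1 \<and> c1 \<le> 4 * n \<and>
     int c2 = int c1 + int a * eff (sigp S) \<and>
     pos_path (base (sigp S), c2) m \<and> target (base (sigp S), c2) m = (base (sigm T), c3) \<and>
     int c3 = int c4 - int b * eff (sigm T) \<and> n < c4 \<and> c4 \<le> 4 * n \<and>
     pos_path (base (sigm T), c4) w \<and> target (base (sigm T), c4) w = \<beta> \<and>
     low n (base (sigm T), c4) w"

lemma candidate_arc: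
  assumes "candidate S T u a m b w c1 c2 c3 c4"
  defines "ts \<equiv> u @ cpow (sigp S) a @ m @ cpow (sigm T) b @ w"
  shows "is_arc Tpos Tzero \<alpha> ts" "target \<alpha> ts = \<beta>"
    "target \<alpha> (u @ cpow (sigp S) a) = (base (sigp S), c2)"
    "target \<alpha> (u @ cpow (sigp S) a @ m) = (base (sigm T), c3)"
    "target \<alpha> (u @ cpow (sigp S) a @ m @ cpow (sigm T) b) = (base (sigm T), c4)"
proof -
  note C = assms(1)[unfolded candidate_def]
  have c: "n < c1" "n < c4" "int c2 = int c1 + int a * eff (sigp S)"
      "int c3 = int c4 - int b * eff (sigm T)"
    using C by auto
  have SP: "walk (base (sigp S)) (sigp S)" "walk_end (base (sigp S)) (sigp S) = base (sigp S)"
      "set (sigp S) \<subseteq> Tpos" "length (sigp S) \<le> n" "0 < eff (sigp S)"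
    using up_cycle C by auto
  have SM: "walk (base (sigm T)) (sigm T)" "walk_end (base (sigm T)) (sigm T) = base (sigm T)"
      "set (sigm T) \<subseteq> Tpos" "length (sigm T) \<le> n" "eff (sigm T) < 0"
    using down_cycle C by auto
  have "0 \<le> int a * eff (sigp S)" using SP by simp
  then have p1: "pos_path (base (sigp S), c1) (cpow (sigp S) a)"
    using pos_path_cpow[OF SP(1-3)] SP(4) c(1) by simp
  have t1: "target (base (sigp S), c1) (cpow (sigp S) a) = (base (sigp S), c2)"
    using pos_path_target[OF p1] walk_end_cpow[OF SP(2)] c(3) by simp
  have "int b * eff (sigm T) \<le> 0" using SM by (simp add: mult_nonneg_nonpos)
  then have p3: "pos_path (base (sigm T), c3) (cpow (sigm T) b)"
    using pos_path_cpow[OF SM(1-3)] SM(4) c(2,4) by simp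
  have t3: "target (base (sigm T), c3) (cpow (sigm T) b) = (base (sigm T), c4)"
    using pos_path_target[OF p3] walk_end_cpow[OF SM(2)] c(4) by simp
  have pos: "pos_path (target \<alpha> u) (cpow (sigp S) a @ m @ cpow (sigm T) b @ w)"
    using C p1 t1 p3 t3 by (simp add: is_path_append)
  show tgt: "target \<alpha> ts = \<beta>"
    using C t1 t3 by (simp add: target_append ts_def)
  show "is_arc Tpos Tzero \<alpha> ts"
    unfolding ts_def by (rule arc_intro) (use C pos tgt \<alpha>_zero \<beta>_zero in \<open>auto simp: ts_def\<close>)
  show "target \<alpha> (u @ cpow (sigp S) a) = (base (sigp S), c2)"
    "target \<alpha> (u @ cpow (sigp S) a @ m) = (base (sigm T), c3)"
    "target \<alpha> (u @ cpow (sigp S) a @ m @ cpow (sigm T) b) = (base (sigm T), c4)"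
    using C t1 t3 by (simp_all add: target_append)
qed

lemma arc_levels:
  assumes "is_arc Tpos Tzero \<alpha> \<rho>" "l \<le> length \<rho>"
  shows "target \<alpha> (take l \<rho>) = (walk_end (fst \<alpha>) (take l \<rho>), nat (eff (take l \<rho>)))"
    "0 \<le> eff (take l \<rho>)" "walk_end (fst \<alpha>) (take l \<rho>) \<in> Q"
proof -
  have \<alpha>: "\<alpha> = (fst \<alpha>, 0)" using \<alpha>_zero by (metis prod.collapse)
  have "is_path Tpos Tzero \<alpha> (take l \<rho>)"
    using assms(1) unfolding is_arc_def by (metis append_take_drop_id is_path_append)
  then have p: "is_path Tpos Tzero (fst \<alpha>, 0) (take l \<rho>)" using \<alpha> by simp
  show "walk_end (fst \<alpha>) (take l \<rho>) \<in> Q"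
    using walk_end_in_Q[OF is_path_walk[OF p] \<alpha>_in_Q path_trans[OF p]] .
  show "target \<alpha> (take l \<rho>) = (walk_end (fst \<alpha>) (take l \<rho>), nat (eff (take l \<rho>)))"
    "0 \<le> eff (take l \<rho>)"
    using path_target[OF p] \<alpha> by simp_all
qed

lemma arc_level_step:
  assumes "is_arc Tpos Tzero \<alpha> \<rho>" "l < length \<rho>"
  shows "\<bar>eff (take (Suc l) \<rho>) - eff (take l \<rho>)\<bar> \<le> 1"
proof -
  have "\<rho> ! l \<in> Tpos \<union> Tzero"
    using path_trans assms unfolding is_arc_def by (meson nth_mem subsetD)
  then have "\<bar>deff (\<rho> ! l)\<bar> \<le> 1" using Tpos_bounds Tzero_bounds by fastforce
  then show ?thesis using assms(2) by (simp add: take_Suc_conv_app_nth)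
qed

text \<open>Since the arc is not low, its counter climbs from \<open>0\<close> to at least \<open>5 n\<close> and falls back
to \<open>0\<close>. Among the \<open>n + 1\<close> levels from \<open>2 n\<close> to \<open>3 n\<close>, two first hits on the way up occur in
the same state, and so do two last hits on the way down.\<close>

lemma arc_climbs:
  assumes arc: "is_arc Tpos Tzero \<alpha> \<rho>" and tgt: "target \<alpha> \<rho> = \<beta>"
  defines "f \<equiv> \<lambda>l. eff (take l \<rho>)" and "st \<equiv> \<lambda>l. walk_end (fst \<alpha>) (take l \<rho>)"
  obtains i j J I where "0 < i" "i < j" "j \<le> J" "J < I" "I \<le> length \<rho>"
    "st i = st j" "st J = st I" "f i < f j" "f I < f J"
    "2 * int n \<le> f i" "f i \<le> 3 * int n" "2 * int n \<le> f I" "f I \<le> 3 * int n"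
    "\<And>l. l \<le> i \<Longrightarrow> f l \<le> 3 * int n" "\<And>l. I \<le> l \<Longrightarrow> l \<le> length \<rho> \<Longrightarrow> f l \<le> 3 * int n"
proof -
  define N where "N = length \<rho>"
  have lev: "target \<alpha> (take l \<rho>) = (st l, nat (f l))" "0 \<le> f l" "st l \<in> Q" if "l \<le> N" for l
    using arc_levels[OF arc] that by (simp_all add: f_def st_def N_def)
  have step: "\<bar>f (Suc l) - f l\<bar> \<le> 1" if "l < N" for l
    using arc_level_step[OF arc] that by (simp add: f_def N_def)
  have f0: "f 0 = 0" by (simp add: f_def)
  have fN: "f N = 0" using lev(1)[of N] tgt \<beta>_zero lev(2)[of N] by (simp add: N_def)
  have "\<not> low n \<alpha> \<rho>" using no_low_arc arc tgt by blast
  then obtain l0 where l0: "l0 \<le> N" "5 * int n \<le> f l0"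
    using lev(1,2) unfolding low_def set_confs N_def by force
  obtain i j where up: "i < j" "j \<le> l0" "st i = st j" "f i < f j" "2 * int n \<le> f i"
      "f i \<le> 3 * int n" "\<And>l. l \<le> i \<Longrightarrow> f l \<le> f i"
    by (rule climb_repeats_state[of l0 f n st Q]) (use step f0 l0 lev(3) finite_Q in auto)
  obtain i' j' where down: "i' < j'" "j' \<le> N - l0" "st (N - i') = st (N - j')"
      "f (N - i') < f (N - j')" "2 * int n \<le> f (N - i')" "f (N - i') \<le> 3 * int n"
      "\<And>l. l \<le> i' \<Longrightarrow> f (N - l) \<le> f (N - i')"
  proof (rule climb_repeats_state[of "N - l0" "\<lambda>l. f (N - l)" n "\<lambda>l. st (N - l)" Q])
    show "\<bar>f (N - Suc l) - f (N - l)\<bar> \<le> 1" if "l < N - l0" for l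
      using step[of "N - Suc l"] that by (simp add: Suc_diff_Suc abs_minus_commute)
  qed (use fN l0 lev(3) finite_Q in auto)
  show ?thesis
  proof (rule that[of i j "N - j'" "N - i'"])
    show "0 < i" using up(5) f0 n_pos by (cases i) auto
    show "f l \<le> 3 * int n" if "l \<le> i" for l using up(6,7) that by fastforce
    show "f l \<le> 3 * int n" if "N - i' \<le> l" "l \<le> length \<rho>" for l
    proof -
      have "N - l \<le> i'" using that down(1,2) by (simp add: N_def)
      then show ?thesis using down(6) down(7)[of "N - l"] that by (simp add: N_def)
    qed
  qed (use up down in \<open>auto simp: N_def\<close>)
qed

lemma arc_segment_cycle:
  assumes arc: "is_arc Tpos Tzero \<alpha> \<rho>" and ij: "0 < i" "i < j" "j \<le> length \<rho>"
    and same: "walk_end (fst \<alpha>) (take i \<rho>) = walk_end (fst \<alpha>) (take j \<rho>)"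
  defines "s \<equiv> walk_end (fst \<alpha>) (take i \<rho>)" and "C \<equiv> take (j - i) (drop i \<rho>)"
  shows "is_cycle Tpos C" "cycle_in C (scc_of s)" "is_scc Q Tpos (scc_of s)"
    "eff C = eff (take j \<rho>) - eff (take i \<rho>)"
proof -
  have split: "take j \<rho> = take i \<rho> @ C" using ij by (simp add: C_def take_add[symmetric])
  have "pos_path (target \<alpha> (take i \<rho>)) C"
    using pos_path_take[OF arc_suffix_pos_path[OF arc ij(1)]] by (simp add: C_def)
  then have "walk s C" "set C \<subseteq> Tpos"
    using arc_levels(1)[OF arc, of i] ij by (auto simp: pos_path_iff s_def)
  moreover have "C \<noteq> []" "walk_end s C = s" using ij split same by (auto simp: C_def s_def)
  moreover have "s \<in> Q" using arc_levels(3)[OF arc, of i] ij by (simp add: s_def)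
  ultimately show "is_cycle Tpos C" "cycle_in C (scc_of s)" "is_scc Q Tpos (scc_of s)"
    using closed_walk_scc by blast+
  show "eff C = eff (take j \<rho>) - eff (take i \<rho>)" using split by simp
qed

lemma arc_climbs_through_sccs:
  assumes arc: "is_arc Tpos Tzero \<alpha> \<rho>" and tgt: "target \<alpha> \<rho> = \<beta>"
  obtains i I s k t k' where "0 < i" "i < I" "I \<le> length \<rho>"
    "target \<alpha> (take i \<rho>) = (s, k)" "target \<alpha> (take I \<rho>) = (t, k')" "s \<in> Q" "t \<in> Q"
    "2 * n \<le> k" "k \<le> 3 * n" "2 * n \<le> k'" "k' \<le> 3 * n"
    "\<And>l. l \<le> i \<Longrightarrow> eff (take l \<rho>) \<le> 3 * int n"
    "\<And>l. I \<le> l \<Longrightarrow> l \<le> length \<rho> \<Longrightarrow> eff (take l \<rho>) \<le> 3 * int n"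
    "is_scc Q Tpos (scc_of s)" "pos_enabled Tpos (scc_of s)"
    "is_scc Q Tpos (scc_of t)" "neg_enabled Tpos (scc_of t)"
proof -
  define f where "f l = eff (take l \<rho>)" for l
  define st where "st l = walk_end (fst \<alpha>) (take l \<rho>)" for l
  obtain i j J I where ix: "0 < i" "i < j" "j \<le> J" "J < I" "I \<le> length \<rho>"
    "st i = st j" "st J = st I" "f i < f j" "f I < f J"
    "2 * int n \<le> f i" "f i \<le> 3 * int n" "2 * int n \<le> f I" "f I \<le> 3 * int n"
    "\<And>l. l \<le> i \<Longrightarrow> f l \<le> 3 * int n" "\<And>l. I \<le> l \<Longrightarrow> l \<le> length \<rho> \<Longrightarrow> f l \<le> 3 * int n"
    using arc_climbs[OF arc tgt] unfolding f_def st_def by blast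
  have ij: "i < length \<rho>" "j \<le> length \<rho>" "0 < J" using ix(1-5) by linarith+
  have at_i: "target \<alpha> (take i \<rho>) = (st i, nat (f i))" "st i \<in> Q"
    using arc_levels[OF arc, of i] ij(1) by (simp_all add: st_def f_def)
  have at_I: "target \<alpha> (take I \<rho>) = (st I, nat (f I))" "st I \<in> Q"
    using arc_levels[OF arc, of I] ix(5) by (simp_all add: st_def f_def)
  have S: "is_scc Q Tpos (scc_of (st i))" "pos_enabled Tpos (scc_of (st i))"
  proof -
    note C = arc_segment_cycle[OF arc ix(1,2) ij(2) ix(6)[unfolded st_def]]
    have "0 < eff (take (j - i) (drop i \<rho>))" using C(4) ix(8) by (simp add: f_def)
    then show "is_scc Q Tpos (scc_of (st i))" "pos_enabled Tpos (scc_of (st i))"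
      using C(1-3) unfolding pos_enabled_def st_def by blast+
  qed
  have T: "is_scc Q Tpos (scc_of (st I))" "neg_enabled Tpos (scc_of (st I))"
  proof -
    note C = arc_segment_cycle[OF arc ij(3) ix(4,5) ix(7)[unfolded st_def]]
    have "eff (take (I - J) (drop J \<rho>)) < 0" using C(4) ix(9) by (simp add: f_def)
    then show "is_scc Q Tpos (scc_of (st I))" "neg_enabled Tpos (scc_of (st I))"
      using C(1-3) ix(7) unfolding neg_enabled_def st_def by auto
  qed
  show ?thesis
  proof (rule that[OF ix(1) _ ix(5) at_i(1) at_I(1) at_i(2) at_I(2) _ _ _ _ _ _ S T])
    show "i < I" using ix(2-4) by linarith
    show "2 * n \<le> nat (f i)" "nat (f i) \<le> 3 * n" "2 * n \<le> nat (f I)" "nat (f I) \<le> 3 * n"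
      using ix(10-13) by (simp_all add: le_nat_iff nat_le_iff)
  qed (use ix(14,15) in \<open>simp_all add: f_def\<close>)
qed

lemma low_arc_prefix:
  assumes arc: "is_arc Tpos Tzero \<alpha> \<rho>" and "i \<le> length \<rho>"
    and below: "\<And>l. l \<le> i \<Longrightarrow> eff (take l \<rho>) < 5 * int n"
  shows "low n \<alpha> (take i \<rho>)"
  unfolding low_def
proof
  fix x assume "x \<in> set (confs \<alpha> (take i \<rho>))"
  then obtain l where l: "l \<le> length (take i \<rho>)" "x = target \<alpha> (take l (take i \<rho>))"
    unfolding set_confs by blast
  then have "l \<le> i" "x = target \<alpha> (take l \<rho>)" by auto
  then show "snd x < 5 * n" using arc_levels[OF arc, of l] below[of l] assms(2) by simp
qed

lemma low_arc_suffix: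
  assumes arc: "is_arc Tpos Tzero \<alpha> \<rho>" and "I \<le> length \<rho>"
    and below: "\<And>l. I \<le> l \<Longrightarrow> l \<le> length \<rho> \<Longrightarrow> eff (take l \<rho>) < 5 * int n"
  shows "low n (target \<alpha> (take I \<rho>)) (drop I \<rho>)"
  unfolding low_def
proof
  fix x assume "x \<in> set (confs (target \<alpha> (take I \<rho>)) (drop I \<rho>))"
  then obtain l where l: "l \<le> length \<rho> - I" "x = target (target \<alpha> (take I \<rho>)) (take l (drop I \<rho>))"
    unfolding set_confs by auto
  then have "x = target \<alpha> (take (I + l) \<rho>)" by (simp add: target_append[symmetric] take_add)
  moreover have "I + l \<le> length \<rho>" using l(1) assms(2) by simp
  ultimately show "snd x < 5 * n"
    using arc_levels[OF arc, of "I + l"] below[of "I + l"] by simp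
qed

lemma arc_prefix_to_walk:
  assumes arc: "is_arc Tpos Tzero \<alpha> \<rho>" and i: "i < length \<rho>"
    and below: "\<And>l. l \<le> i \<Longrightarrow> eff (take l \<rho>) \<le> 3 * int n"
    and at_i: "target \<alpha> (take i \<rho>) = (s, k)" "k \<le> 3 * n"
    and P: "walk s P" "set P \<subseteq> Tpos" "length P < n" "n \<le> k"
  shows "is_path Tpos Tzero \<alpha> (take i \<rho> @ P)" "stays_positive \<alpha> (take i \<rho> @ P)"
    "low n \<alpha> (take i \<rho> @ P)" "target \<alpha> (take i \<rho> @ P) = (walk_end s P, nat (int k + eff P))"
proof -
  note walk = short_walk_pos_path[OF P(1,2), of k]
  have "is_path Tpos Tzero \<alpha> (take i \<rho>)"
    using arc unfolding is_arc_def by (metis append_take_drop_id is_path_append)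
  then show "is_path Tpos Tzero \<alpha> (take i \<rho> @ P)"
    using walk(1) P(3,4) at_i is_path_without_zero_tests by (simp add: is_path_append)
  have "stays_positive \<alpha> (take i \<rho>)"
    using arc i unfolding stays_positive_iff is_arc_def by (auto simp: confs_nth min_def)
  then show "stays_positive \<alpha> (take i \<rho> @ P)"
    using walk(2) P(3,4) at_i by (simp add: stays_positive_append)
  have "low n \<alpha> (take i \<rho>)"
  proof (rule low_arc_prefix[OF arc])
    show "eff (take l \<rho>) < 5 * int n" if "l \<le> i" for l using below[OF that] n_pos by linarith
  qed (use i in simp)
  then show "low n \<alpha> (take i \<rho> @ P)" using walk(4) P(3,4) at_i by (simp add: low_append)
  show "target \<alpha> (take i \<rho> @ P) = (walk_end s P, nat (int k + eff P))"
    using walk(3) P(3,4) at_i by (simp add: target_append)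
qed

lemma walk_to_arc_suffix:
  assumes arc: "is_arc Tpos Tzero \<alpha> \<rho>" "target \<alpha> \<rho> = \<beta>" and I: "0 < I" "I \<le> length \<rho>"
    and below: "\<And>l. I \<le> l \<Longrightarrow> l \<le> length \<rho> \<Longrightarrow> eff (take l \<rho>) \<le> 3 * int n"
    and at_I: "target \<alpha> (take I \<rho>) = (t, k)" "k \<le> 3 * n"
    and Y: "walk q Y" "set Y \<subseteq> Tpos" "walk_end q Y = t" "length Y < n" "int c = int k - eff Y"
    and "2 * n \<le> k"
  shows "pos_path (q, c) (Y @ drop I \<rho>)" "target (q, c) (Y @ drop I \<rho>) = \<beta>"
    "low n (q, c) (Y @ drop I \<rho>)"
proof -
  have "int (length Y) < int c" using eff_bounded_by_length[OF Y(2)] Y(4,5) \<open>2 * n \<le> k\<close> by linarith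
  then have "length Y < c" by simp
  note walk = short_walk_pos_path[OF Y(1,2) this]
  have tY: "target (q, c) Y = (t, k)" using walk(3) Y(3,5) by simp
  show "pos_path (q, c) (Y @ drop I \<rho>)"
    using walk(1) tY arc_suffix_pos_path[OF arc(1) I(1)] at_I by (simp add: is_path_append)
  show "target (q, c) (Y @ drop I \<rho>) = \<beta>"
    using tY at_I arc(2) by (simp add: target_append target_take_drop[of \<alpha> I \<rho>, symmetric])
  have "int c + int (length Y) < 5 * int n"
    using eff_bounded_by_length[OF Y(2)] Y(4,5) at_I(2) by linarith
  then have "c + length Y < 5 * n" by linarith
  moreover have "low n (target \<alpha> (take I \<rho>)) (drop I \<rho>)"
  proof (rule low_arc_suffix[OF arc(1) I(2)])
    show "eff (take l \<rho>) < 5 * int n" if "I \<le> l" "l \<le> length \<rho>" for l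
      using below[OF that] n_pos by linarith
  qed
  ultimately show "low n (q, c) (Y @ drop I \<rho>)" using walk(4) tY at_I by (simp add: low_append)
qed

text \<open>The cap leads from \<open>q\<close> (the base of \<open>\<sigma>\<^sup>+\<^sub>S\<close>) to the climb, follows the arc from position \<open>i\<close>
to \<open>I\<close> and leaves to \<open>r\<close> (the base of \<open>\<sigma>\<^sup>-\<^sub>T\<close>). Each of the two connecting loops is traversed
\<open>M\<close> times in total, so that for \<open>M = A * B\<close> their effect can be balanced by the pumps.\<close>

lemma pumped_cap:
  assumes arc: "is_arc Tpos Tzero \<alpha> \<rho>" and iI: "0 < i" "i \<le> I" "I \<le> length \<rho>"
    and at: "target \<alpha> (take i \<rho>) = (s, k)" "target \<alpha> (take I \<rho>) = (t, k')" "k \<le> 3 * n"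
    and up: "walk s P" "walk_end s P = q" "walk q P'" "walk_end q P' = s"
      "set (P @ P') \<subseteq> Tpos" "length P < n" "length P' < n"
    and down: "walk t Q1" "walk_end t Q1 = r" "walk r Q1'" "walk_end r Q1' = t"
      "set (Q1 @ Q1') \<subseteq> Tpos" "length Q1 < n" "length Q1' < n"
    and M: "1 \<le> M"
  defines "m \<equiv> (P' @ cpow (P @ P') (M - 1)) @ take (I - i) (drop i \<rho>) @ (cpow (Q1 @ Q1') (M - 1) @ Q1)"
  shows "eff m = int M * eff (P @ P' @ Q1 @ Q1') + int k' - int k - eff P - eff Q1'"
    and "n + 4 * n * M < c \<Longrightarrow> int (n + 4 * n * M) < int c + eff m \<Longrightarrow>
      pos_path (q, c) m \<and> target (q, c) m = (r, nat (int c + eff m))"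
proof -
  define X where "X = P' @ cpow (P @ P') (M - 1)"
  define Z where "Z = take (I - i) (drop i \<rho>)"
  define Y where "Y = cpow (Q1 @ Q1') (M - 1) @ Q1"
  have m: "m = X @ Z @ Y" by (simp add: m_def X_def Y_def Z_def)
  have split: "take I \<rho> = take i \<rho> @ Z" using iI by (simp add: Z_def take_add[symmetric])
  have ZQ: "pos_path (s, k) Z"
    using pos_path_take[OF arc_suffix_pos_path[OF arc iI(1)]] at(1) by (simp add: Z_def)
  have i_lev: "s = walk_end (fst \<alpha>) (take i \<rho>)" "int k = eff (take i \<rho>)"
    using arc_levels[OF arc, of i] at(1) iI by auto
  have I_lev: "t = walk_end (fst \<alpha>) (take I \<rho>)" "int k' = eff (take I \<rho>)"
    using arc_levels[OF arc, of I] at(2) iI by auto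
  have Zend: "walk_end s Z = t" and Zeff: "eff Z = int k' - int k"
    using i_lev I_lev split by simp_all
  define nM where "nM = int n * int M"
  have nM: "int n \<le> nM" using M by (simp add: nM_def mult_le_cancel_left1)
  have "length X + n \<le> 2 * n * M" "length Y + n \<le> 2 * n * M"
    using length_cpow_le[OF up(6,7,7) M] length_cpow_le[OF down(6,7,6) M] by (simp_all add: X_def Y_def)
  then have "int (length X + n) \<le> int (2 * n * M)" "int (length Y + n) \<le> int (2 * n * M)"
    by (simp_all only: of_nat_le_iff)
  then have lenX: "int (length X) + int n \<le> 2 * nM" and lenY: "int (length Y) + int n \<le> 2 * nM"
    by (simp_all add: nM_def)
  have X: "walk q X" "set X \<subseteq> Tpos" "walk_end q X = s"
    using up walk_cpow[of s "P @ P'"] walk_end_cpow[of s "P @ P'"] set_cpow_subset[of _ "P @ P'"]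
    by (auto simp: X_def)
  have Y: "walk t Y" "set Y \<subseteq> Tpos" "walk_end t Y = r"
    using down walk_cpow[of t "Q1 @ Q1'"] walk_end_cpow[of t "Q1 @ Q1'"] set_cpow_subset[of _ "Q1 @ Q1'"]
    by (auto simp: Y_def)
  have "eff X = eff P' + int (M - 1) * eff (P @ P')" "eff Y = int (M - 1) * eff (Q1 @ Q1') + eff Q1"
    by (simp_all add: X_def Y_def)
  then show "eff m = int M * eff (P @ P' @ Q1 @ Q1') + int k' - int k - eff P - eff Q1'"
    using Zeff M unfolding m by (simp add: of_nat_diff algebra_simps)
  show "pos_path (q, c) m \<and> target (q, c) m = (r, nat (int c + eff m))"
    if high: "n + 4 * n * M < c" "int (n + 4 * n * M) < int c + eff m"
  proof -
    have "int (n + 4 * n * M) < int c" using high(1) by (simp only: of_nat_less_iff)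
    then have high1: "int n + 4 * nM < int c" by (simp add: nM_def)
    have high2: "int n + 4 * nM < int c + eff m" using high(2) by (simp add: nM_def)
    have "int (length X) < int c" using lenX high1 nM by linarith
    then have "length X < c" by simp
    moreover have "int k \<le> int c + eff X"
      using lenX high1 nM at(3) eff_bounded_by_length[OF X(2)] by linarith
    moreover have "int (length Y) < int c + eff (X @ Z @ Y)"
      using lenY high2 nM unfolding m by linarith
    ultimately show ?thesis
      using pos_path_between_walks[OF X(1,2,3) _ ZQ _ _ Y(2)] Y(1,3) Zend unfolding m by auto
  qed
qed

lemma candidate_exists:
  assumes arc: "is_arc Tpos Tzero \<alpha> \<rho>" and tgt: "target \<alpha> \<rho> = \<beta>"
  obtains S T u a m b w c1 c2 c3 c4 where "candidate S T u a m b w c1 c2 c3 c4"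
proof -
  obtain i I s k t k' where climb: "0 < i" "i < I" "I \<le> length \<rho>"
    "target \<alpha> (take i \<rho>) = (s, k)" "target \<alpha> (take I \<rho>) = (t, k')" "s \<in> Q" "t \<in> Q"
    "2 * n \<le> k" "k \<le> 3 * n" "2 * n \<le> k'" "k' \<le> 3 * n"
    "\<And>l. l \<le> i \<Longrightarrow> eff (take l \<rho>) \<le> 3 * int n"
    "\<And>l. I \<le> l \<Longrightarrow> l \<le> length \<rho> \<Longrightarrow> eff (take l \<rho>) \<le> 3 * int n"
    "is_scc Q Tpos (scc_of s)" "pos_enabled Tpos (scc_of s)"
    "is_scc Q Tpos (scc_of t)" "neg_enabled Tpos (scc_of t)"
    by (rule arc_climbs_through_sccs[OF arc tgt]) blast
  define S T where "S = scc_of s" and "T = scc_of t"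
  define bS bT where "bS = base (sigp S)" and "bT = base (sigm T)"
  have "bS \<in> scc_of s" "bT \<in> scc_of t"
    using up_cycle(6)[OF climb(14,15)] down_cycle(6)[OF climb(16,17)]
    by (simp_all add: bS_def bT_def S_def T_def)
  then have reach: "(s, bS) \<in> (edges Tpos)\<^sup>*" "(bS, s) \<in> (edges Tpos)\<^sup>*" "bS \<in> Q"
    "(t, bT) \<in> (edges Tpos)\<^sup>*" "(bT, t) \<in> (edges Tpos)\<^sup>*" "bT \<in> Q"
    by (simp_all add: scc_of_def)
  obtain P where P: "walk s P" "set P \<subseteq> Tpos" "walk_end s P = bS" "length P < n"
    using short_walk[OF reach(1) climb(6)] .
  obtain P' where P': "walk bS P'" "set P' \<subseteq> Tpos" "walk_end bS P' = s" "length P' < n"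
    using short_walk[OF reach(2,3)] .
  obtain Q1 where Q1: "walk t Q1" "set Q1 \<subseteq> Tpos" "walk_end t Q1 = bT" "length Q1 < n"
    using short_walk[OF reach(4) climb(7)] .
  obtain Q1' where Q1': "walk bT Q1'" "set Q1' \<subseteq> Tpos" "walk_end bT Q1' = t" "length Q1' < n"
    using short_walk[OF reach(5,6)] .
  define A B where "A = nat (eff (sigp S))" and "B = nat (- eff (sigm T))"
  have AB: "eff (sigp S) = int A" "eff (sigm T) = - int B" "1 \<le> A * B"
    using up_cycle(5)[OF climb(14,15)] down_cycle(5)[OF climb(16,17)]
    by (auto simp: A_def B_def S_def T_def)
  define M E where "M = A * B" and "E = eff (P @ P' @ Q1 @ Q1')"
  obtain x y where xy: "int (x * A) - int (y * B) = int M * - E"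
    "4 * n * M \<le> x * A" "4 * n * M \<le> y * B"
    unfolding M_def by (rule pumping_balance)
  define c1 c4 where "c1 = nat (int k + eff P)" and "c4 = nat (int k' - eff Q1')"
  define c2 c3 where "c2 = c1 + x * A" and "c3 = c4 + y * B"
  have "\<bar>eff P\<bar> < int n" "\<bar>eff Q1'\<bar> < int n"
    using eff_bounded_by_length[OF P(2)] eff_bounded_by_length[OF Q1'(2)] P(4) Q1'(4) by linarith+
  then have c1: "int c1 = int k + eff P" "n < c1" "c1 \<le> 4 * n"
    and c4: "int c4 = int k' - eff Q1'" "n < c4" "c4 \<le> 4 * n"
    using climb(8-11) by (auto simp: c1_def c4_def)
  define u where "u = take i \<rho> @ P"
  have u: "is_path Tpos Tzero \<alpha> u" "stays_positive \<alpha> u" "low n \<alpha> u" "target \<alpha> u = (bS, c1)"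
    using arc_prefix_to_walk[OF arc _ climb(12,4,9) P(1,2,4)] climb(1-3,8) P(3) c1(1)
    by (simp_all add: u_def c1_def)
  define w where "w = Q1' @ drop I \<rho>"
  have w: "pos_path (bT, c4) w" "target (bT, c4) w = \<beta>" "low n (bT, c4) w"
    using walk_to_arc_suffix[OF arc tgt _ climb(3,13,5,11) Q1'(1-4) c4(1) climb(10)] climb(1,2)
    by (simp_all add: w_def)
  define m where "m = (P' @ cpow (P @ P') (M - 1)) @ take (I - i) (drop i \<rho>) @
    (cpow (Q1 @ Q1') (M - 1) @ Q1)"
  have "i \<le> I" "1 \<le> M" "set (P @ P') \<subseteq> Tpos" "set (Q1 @ Q1') \<subseteq> Tpos"
    using climb(2) AB(3) P(2) P'(2) Q1(2) Q1'(2) by (simp_all add: M_def)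
  note cap = pumped_cap[OF arc climb(1) this(1) climb(3,4,5,9) P(1,3) P'(1,3) this(3)
      P(4) P'(4) Q1(1,3) Q1'(1,3) this(4) Q1(4) Q1'(4) this(2), folded m_def]
  have "int c2 = int c1 + int (x * A)" "int c3 = int c4 + int (y * B)"
    by (simp_all only: c2_def c3_def of_nat_add)
  then have bal: "int c2 + eff m = int c3"
    using cap(1) xy(1) c1(1) c4(1) by (simp add: E_def algebra_simps)
  have "n + 4 * n * M < c2" "n + 4 * n * M < c3"
    using xy(2,3) c1(2) c4(2) by (simp_all add: c2_def c3_def)
  moreover from this(2) have "int (n + 4 * n * M) < int c2 + eff m" using bal by linarith
  ultimately have m: "pos_path (bS, c2) m" "target (bS, c2) m = (bT, c3)"
    using cap(2) bal P(3) Q1(3) by (simp_all add: bS_def bT_def)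
  have "candidate S T u x m y w c1 c2 c3 c4"
    unfolding candidate_def using climb(14-17) u w m c1 c4 AB
    by (simp add: S_def T_def bS_def bT_def c2_def c3_def)
  then show ?thesis by (rule that)
qed

lemma candidate_remove_cap_cycle:
  assumes C: "candidate S T u a (m1 @ v @ m2) b w c1 c2 c3 c4" and v: "is_cycle Tpos v"
    and xy: "int x * eff (sigp S) + int y * eff (sigm T) = eff v"
  shows "\<exists>c2' c3'. candidate S T u (a + x) (m1 @ m2) (b + y) w c1 c2' c3' c4"
proof -
  note C = C[unfolded candidate_def]
  have SP: "0 < eff (sigp S)" using up_cycle C by auto
  have SM: "eff (sigm T) < 0" using down_cycle C by auto
  define bS where "bS = base (sigp S)"
  define bT where "bT = base (sigm T)"
  have P: "pos_path (bS, c2) (m1 @ v @ m2)" "target (bS, c2) (m1 @ v @ m2) = (bT, c3)"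
    using C by (auto simp: bS_def bT_def)
  obtain s1 d1 where t1: "target (bS, c2) m1 = (s1, d1)" by fastforce
  have p1: "pos_path (bS, c2) m1" and pv: "pos_path (s1, d1) v"
    and p2': "pos_path (target (s1, d1) v) m2"
    using P t1 by (auto simp: is_path_append)
  have e1: "s1 = walk_end bS m1" "int d1 = int c2 + eff m1"
    using pos_path_target[OF p1] t1 by auto
  have "walk s1 v" using pv by (simp add: pos_path_iff)
  then have "s1 = base v" using v by (cases v) (auto simp: base_def is_cycle_def)
  then have ev: "walk_end s1 v = s1" using cycle_walk[OF v] by simp
  define d2 where "d2 = nat (int d1 + eff v)"
  have tv: "target (s1, d1) v = (s1, d2)" and d2: "int d2 = int d1 + eff v"
    using pos_path_target[OF pv] ev by (auto simp: d2_def)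
  have p2: "pos_path (s1, d2) m2" using p2' tv by simp
  have t2: "target (s1, d2) m2 = (bT, c3)" using P t1 tv by (simp add: target_append)
  have e2: "bT = walk_end s1 m2" "int c3 = int d2 + eff m2"
    using pos_path_target[OF p2] t2 by auto
  define c2' where "c2' = nat (int c2 + int x * eff (sigp S))"
  have c2': "int c2' = int c2 + int x * eff (sigp S)" using SP by (simp add: c2'_def)
  define c3' where "c3' = nat (int c3 - int y * eff (sigm T))"
  have yb: "0 \<le> - int y * eff (sigm T)" using SM by (simp add: mult_nonneg_nonpos)
  have c3': "int c3' = int c3 - int y * eff (sigm T)" using yb by (simp add: c3'_def)
  have "0 \<le> int x * eff (sigp S)" using SP by simp
  then have q1: "pos_path (bS, c2') m1" using pos_path_mono[OF p1] c2' by simp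
  define d1' where "d1' = nat (int c2' + eff m1)"
  have t1': "target (bS, c2') m1 = (s1, d1')"
    using pos_path_target[OF q1] e1 by (simp add: d1'_def)
  have d1': "int d1' = int d1 + int x * eff (sigp S)"
    using pos_path_target[OF q1] e1 c2' by (simp add: d1'_def)
  have "d2 \<le> d1'" using d1' d2 xy yb by linarith
  then have q2: "pos_path (s1, d1') m2" using pos_path_mono[OF p2] by simp
  have t2': "target (s1, d1') m2 = (bT, c3')"
    using pos_path_target[OF q2] e2 d1' d2 c3' xy by simp
  have "pos_path (bS, c2') (m1 @ m2)" using q1 t1' q2 by (simp add: is_path_append)
  moreover have "target (bS, c2') (m1 @ m2) = (bT, c3')" using t1' t2' by (simp add: target_append)
  moreover have "int c2' = int c1 + int (a + x) * eff (sigp S)"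
    using c2' C by (simp add: algebra_simps)
  moreover have "int c3' = int c4 - int (b + y) * eff (sigm T)"
    using c3' C by (simp add: algebra_simps)
  ultimately show ?thesis using C unfolding candidate_def bS_def bT_def by blast
qed

lemma candidate_shorten_pumps:
  assumes C: "candidate S T u a m b w c1 c2 c3 c4"
    and l: "int k * eff (sigp S) = l" "- int k' * eff (sigm T) = l" "k \<le> a" "k' \<le> b"
    and high: "int (length m) + l < int c2 \<or> int (length m) + l < int c3"
  shows "\<exists>c2' c3'. candidate S T u (a - k) m (b - k') w c1 c2' c3' c4"
proof -
  note C = C[unfolded candidate_def]
  have SP: "0 < eff (sigp S)" using up_cycle C by auto
  have SM: "eff (sigm T) < 0" using down_cycle C by auto
  define bS where "bS = base (sigp S)"
  define bT where "bT = base (sigm T)"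
  have P: "pos_path (bS, c2) m" "target (bS, c2) m = (bT, c3)"
    using C by (auto simp: bS_def bT_def)
  have e: "bT = walk_end bS m" "int c3 = int c2 + eff m" using pos_path_target[OF P(1)] P(2) by auto
  have m: "walk bS m" "set m \<subseteq> Tpos" using P(1) by (auto simp: pos_path_iff)
  have c: "int c2 = int c1 + int a * eff (sigp S)" "int c3 = int c4 - int b * eff (sigm T)"
    using C by auto
  have "int k * eff (sigp S) \<le> int a * eff (sigp S)" using l(3) SP by simp
  then have "l \<le> int c2" using c(1) l(1) by linarith
  then have c2': "int (nat (int c2 - l)) = int c2 - l" by simp
  have "int b * eff (sigm T) \<le> int k' * eff (sigm T)" using l(4) SM by simp
  then have "l \<le> int c3" using c(2) l(2) by linarith
  then have c3': "int (nat (int c3 - l)) = int c3 - l" by simp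
  have q: "pos_path (bS, nat (int c2 - l)) m"
    using high pos_path_if_high_start[OF m] pos_path_if_high_end[OF m] c2' e by auto
  have "target (bS, nat (int c2 - l)) m = (bT, nat (int c3 - l))"
    using pos_path_target[OF q] e c2' c3' by simp
  moreover have "int (a - k) * eff (sigp S) = int a * eff (sigp S) - int k * eff (sigp S)"
    "int (b - k') * eff (sigm T) = int b * eff (sigm T) - int k' * eff (sigm T)"
    using l(3,4) by (simp_all add: of_nat_diff left_diff_distrib)
  then have "int (nat (int c2 - l)) = int c1 + int (a - k) * eff (sigp S)"
    "int (nat (int c3 - l)) = int c4 - int (b - k') * eff (sigm T)"
    using c c2' c3' l(1,2) by linarith+
  ultimately show ?thesis using C q unfolding candidate_def bS_def bT_def by blast
qed

lemma candidate_shift_up_cycle: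
  assumes C: "candidate S T u a m b w c1 c2 c3 c4" and "1 \<le> a"
    and high: "int c1 + eff (sigp S) < int c4"
  shows "\<exists>c1'. candidate S T (u @ sigp S) (a - 1) m b w c1' c2 c3 c4"
proof -
  note C = C[unfolded candidate_def]
  have SP: "walk (base (sigp S)) (sigp S)" "walk_end (base (sigp S)) (sigp S) = base (sigp S)"
    "set (sigp S) \<subseteq> Tpos" "length (sigp S) \<le> n" "0 < eff (sigp S)"
    using up_cycle C by auto
  define bS where "bS = base (sigp S)"
  define c1' where "c1' = nat (int c1 + eff (sigp S))"
  have c1': "int c1' = int c1 + eff (sigp S)" using SP by (simp add: c1'_def)
  have p: "pos_path (bS, c1) (sigp S)"
    using pos_path_if_high_start[OF SP(1,3)] SP(4) C by (simp add: bS_def)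
  have t: "target (bS, c1) (sigp S) = (bS, c1')"
    using pos_path_target[OF p] SP(2) by (simp add: bS_def c1'_def)
  have tu: "target \<alpha> u = (bS, c1)" using C by (simp add: bS_def)
  have "n < c1" using C by simp
  then have "0 < c1'" using c1' SP(5) by linarith
  then have "stays_positive (bS, c1) (sigp S)" using pos_path_stays_positive[OF p] t by simp
  then have pos: "stays_positive \<alpha> (u @ sigp S)" using C tu by (simp add: stays_positive_append)
  have "low n (bS, c1) (sigp S)" by (rule low_if_short[OF p]) (use SP high C in linarith)
  then have low: "low n \<alpha> (u @ sigp S)" using C tu by (simp add: low_append)
  have path: "is_path Tpos Tzero \<alpha> (u @ sigp S)"
    using C tu is_path_without_zero_tests[OF p] by (simp add: is_path_append)
  have "int c2 = int c1' + int (a - 1) * eff (sigp S)"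
    using C c1' assms(2) by (simp add: algebra_simps of_nat_diff)
  then have "candidate S T (u @ sigp S) (a - 1) m b w c1' c2 c3 c4"
    using C path pos low t tu c1' SP high unfolding candidate_def bS_def by (auto simp: target_append)
  then show ?thesis by blast
qed

lemma candidate_shift_down_cycle:
  assumes C: "candidate S T u a m b w c1 c2 c3 c4" and "1 \<le> b"
    and high: "int c4 - eff (sigm T) < int c1"
  shows "\<exists>c4'. candidate S T u a m (b - 1) (sigm T @ w) c1 c2 c3 c4'"
proof -
  note C = C[unfolded candidate_def]
  have SM: "walk (base (sigm T)) (sigm T)" "walk_end (base (sigm T)) (sigm T) = base (sigm T)"
    "set (sigm T) \<subseteq> Tpos" "length (sigm T) \<le> n" "eff (sigm T) < 0"
    using down_cycle C by auto
  define bT where "bT = base (sigm T)"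
  define c4' where "c4' = nat (int c4 - eff (sigm T))"
  have c4': "int c4' = int c4 - eff (sigm T)" using SM by (simp add: c4'_def)
  have "length (sigm T) < c4'" using SM C c4' by simp
  then have p: "pos_path (bT, c4') (sigm T)"
    using pos_path_if_high_start[OF SM(1,3)] by (simp add: bT_def)
  have t: "target (bT, c4') (sigm T) = (bT, c4)"
    using pos_path_target[OF p] SM(2) c4' by (simp add: bT_def)
  have "low n (bT, c4') (sigm T)" by (rule low_if_short[OF p]) (use SM high C c4' in linarith)
  then have low: "low n (bT, c4') (sigm T @ w)" using C t by (simp add: low_append bT_def)
  have pw: "pos_path (bT, c4') (sigm T @ w)" using p t C by (simp add: is_path_append bT_def)
  have tw: "target (bT, c4') (sigm T @ w) = \<beta>" using t C by (simp add: target_append bT_def)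
  have "int c3 = int c4' - int (b - 1) * eff (sigm T)"
    using C c4' assms(2) by (simp add: algebra_simps of_nat_diff)
  then have "candidate S T u a m (b - 1) (sigm T @ w) c1 c2 c3 c4'"
    using C low pw tw c4' SM high unfolding candidate_def bT_def by auto
  then show ?thesis by blast
qed

lemma candidate_cut_prefix:
  assumes C: "candidate S T u a m b w c1 c2 c3 c4"
    and loop: "target \<alpha> (take i u) = target \<alpha> (take j u)"
  shows "candidate S T (take i u @ drop j u) a m b w c1 c2 c3 c4"
proof -
  note C = C[unfolded candidate_def]
  have "is_path Tpos Tzero \<alpha> (take i u @ drop j u)"
    by (rule splice_compositional[OF is_path_append]) (use C loop in auto)
  moreover have "stays_positive \<alpha> (take i u @ drop j u)"
    by (rule splice_compositional[OF stays_positive_append]) (use C loop in auto)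
  moreover have "low n \<alpha> (take i u @ drop j u)"
    by (rule splice_compositional[OF low_append]) (use C loop in auto)
  moreover have "target \<alpha> (take i u @ drop j u) = target \<alpha> u" by (rule target_splice[OF loop])
  ultimately show ?thesis using C unfolding candidate_def by simp
qed

lemma candidate_cut_suffix:
  assumes C: "candidate S T u a m b w c1 c2 c3 c4"
    and loop: "target (base (sigm T), c4) (take i w) = target (base (sigm T), c4) (take j w)"
  shows "candidate S T u a m b (take i w @ drop j w) c1 c2 c3 c4"
proof -
  note C = C[unfolded candidate_def]
  let ?\<gamma> = "(base (sigm T), c4)"
  have "pos_path ?\<gamma> (take i w @ drop j w)"
    by (rule splice_compositional[OF is_path_append]) (use C loop in auto)
  moreover have "low n ?\<gamma> (take i w @ drop j w)"
    by (rule splice_compositional[OF low_append]) (use C loop in auto)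
  moreover have "target ?\<gamma> (take i w @ drop j w) = target ?\<gamma> w" by (rule target_splice[OF loop])
  ultimately show ?thesis using C unfolding candidate_def by simp
qed

text \<open>Otherwise the prefix of \<open>u\<close> up to the common configuration followed by the rest of
\<open>w\<close> would be a low arc.\<close>

lemma candidate_prefix_suffix_disjoint:
  assumes C: "candidate S T u a m b w c1 c2 c3 c4"
  shows "set (confs \<alpha> u) \<inter> set (confs (base (sigm T), c4) w) = {}"
proof (rule ccontr)
  note C = C[unfolded candidate_def]
  let ?\<gamma> = "(base (sigm T), c4)" and ?ts = "\<lambda>i j. take i u @ drop j w"
  assume "set (confs \<alpha> u) \<inter> set (confs ?\<gamma> w) \<noteq> {}"
  then obtain i j where ij: "target \<alpha> (take i u) = target ?\<gamma> (take j w)"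
    unfolding set_confs by blast
  have path: "is_path Tpos Tzero \<alpha> (take i u)" and pos: "stays_positive \<alpha> (take i u)"
    using C is_path_append[of Tpos Tzero \<alpha> "take i u" "drop i u"]
      stays_positive_append[of \<alpha> "take i u" "drop i u"] by auto
  have "pos_path (target \<alpha> (take i u)) (drop j w)"
    using ij C is_path_append[of Tpos "{}" ?\<gamma> "take j w" "drop j w"] by simp
  moreover have tgt: "target \<alpha> (?ts i j) = \<beta>" using target_splice[OF ij] C by simp
  ultimately have "is_arc Tpos Tzero \<alpha> (?ts i j)"
    using arc_intro[OF path \<alpha>_zero pos] \<beta>_zero by simp
  moreover have "low n \<alpha> (?ts i j)"
    by (rule splice_compositional[OF low_append]) (use C ij in auto)
  ultimately show False using no_low_arc tgt by blast
qed

lemma ex_minimal_candidate: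
  assumes "candidate S T u a m b w c1 c2 c3 c4"
  obtains S T u a m b w c1 c2 c3 c4 where "candidate S T u a m b w c1 c2 c3 c4"
    "\<And>S' T' u' a' m' b' w' c1' c2' c3' c4'. candidate S' T' u' a' m' b' w' c1' c2' c3' c4' \<Longrightarrow>
       (candidate_size u' a' m' b' w', candidate_size u a m b w) \<notin> lex3"
proof -
  define sizes where "sizes = {candidate_size u a m b w | S T u a m b w c1 c2 c3 c4.
    candidate S T u a m b w c1 c2 c3 c4}"
  have "sizes \<noteq> {}" using assms unfolding sizes_def by blast
  then obtain k where "k \<in> sizes" and k: "\<And>k'. (k', k) \<in> lex3 \<Longrightarrow> k' \<notin> sizes"
    using wfE_min'[of lex3 sizes] by (metis wf_lex_prod wf_less_than)
  then obtain S T u a m b w c1 c2 c3 c4 where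
    k_eq: "k = candidate_size u a m b w" and C: "candidate S T u a m b w c1 c2 c3 c4"
    unfolding sizes_def by blast
  show ?thesis
  proof (rule that[OF C])
    fix S' T' u' a' m' b' w' c1' c2' c3' c4'
    assume "candidate S' T' u' a' m' b' w' c1' c2' c3' c4'"
    then have "candidate_size u' a' m' b' w' \<in> sizes" unfolding sizes_def by blast
    then show "(candidate_size u' a' m' b' w', candidate_size u a m b w) \<notin> lex3"
      using k k_eq by blast
  qed
qed

end

section \<open>Minimal candidates are normal arcs\<close>

locale minimal_candidate = high_arcs Q Tpos Tzero sigp sigm \<alpha> \<beta>
    for Q :: "'q set" and Tpos Tzero sigp sigm \<alpha> \<beta> +
  fixes S T :: "'q set" and u m w :: "'q trans list" and a b c1 c2 c3 c4 :: nat
  assumes candidate: "candidate S T u a m b w c1 c2 c3 c4"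
    and minimal: "\<And>S' T' u' a' m' b' w' c1' c2' c3' c4'.
      candidate S' T' u' a' m' b' w' c1' c2' c3' c4' \<Longrightarrow>
      (candidate_size u' a' m' b' w', candidate_size u a m b w) \<notin> lex3"
begin

definition A :: nat where "A = nat (eff (sigp S))"

definition B :: nat where "B = nat (- eff (sigm T))"

lemma candidate_facts:
  "is_scc Q Tpos S" "pos_enabled Tpos S" "is_scc Q Tpos T" "neg_enabled Tpos T"
  "n < c1" "c1 \<le> 4 * n" "n < c4" "c4 \<le> 4 * n"
  "int c2 = int c1 + int a * int A" "int c3 = int c4 + int b * int B"
  "pos_path (base (sigp S), c2) m" "target (base (sigp S), c2) m = (base (sigm T), c3)"
  "eff (sigp S) = int A" "eff (sigm T) = - int B" "0 < A" "0 < B"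
proof -
  note C = candidate[unfolded candidate_def]
  show S: "is_scc Q Tpos S" "pos_enabled Tpos S" and T: "is_scc Q Tpos T" "neg_enabled Tpos T"
    using C by auto
  show A: "eff (sigp S) = int A" "0 < A" using up_cycle[OF S] by (auto simp: A_def)
  show B: "eff (sigm T) = - int B" "0 < B" using down_cycle[OF T] by (auto simp: B_def)
  show "n < c1" "c1 \<le> 4 * n" "n < c4" "c4 \<le> 4 * n"
    "int c2 = int c1 + int a * int A" "int c3 = int c4 + int b * int B"
    "pos_path (base (sigp S), c2) m" "target (base (sigp S), c2) m = (base (sigm T), c3)"
    using C A B by auto
qed

lemma cap_eff: "int c3 = int c2 + eff m" "\<bar>eff m\<bar> \<le> int (length m)"
proof -
  note C = candidate_facts
  show "int c3 = int c2 + eff m" using pos_path_target[OF C(11)] C(12) by simp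
  have "set m \<subseteq> Tpos" using C(11) by (simp add: pos_path_iff)
  then show "\<bar>eff m\<bar> \<le> int (length m)" using eff_bounded_by_length by fastforce
qed

lemma pumps_lcm:
  "int (lcm A B div A) * eff (sigp S) = int (lcm A B)"
  "- int (lcm A B div B) * eff (sigm T) = int (lcm A B)"
proof -
  note C = candidate_facts
  show "int (lcm A B div A) * eff (sigp S) = int (lcm A B)"
    using lcm_quotients(1)[OF C(15,16)] C(13) by (metis of_nat_mult)
  show "- int (lcm A B div B) * eff (sigm T) = int (lcm A B)"
    using lcm_quotients(2)[OF C(15,16)] C(14) by (metis of_nat_mult minus_mult_minus)
qed

text \<open>If the up-pumps raise the counter by more than \<open>2 length m + 2 lcm A B\<close>, then either
\<open>lcm A B\<close> can be taken away from both pumps, or the counter at the end of the cap is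
so high that one iteration of \<open>\<sigma>\<^sup>+\<^sub>S\<close> can be moved into the prefix.\<close>

lemma up_pumps_bounded: "a * A \<le> 2 * length m + 2 * lcm A B"
proof (rule ccontr)
  note C = candidate_facts and E = cap_eff
  define l where "l = lcm A B"
  have l: "(l div A) * A = l" "(l div B) * B = l" "0 < l div A" "0 < l div B" "A \<le> l"
    using lcm_quotients[OF C(15,16)] by (simp_all add: l_def)
  assume "\<not> a * A \<le> 2 * length m + 2 * l"
  then have big: "2 * length m + 2 * l < a * A" by simp
  then have "int (2 * length m + 2 * l) < int (a * A)" by linarith
  then have big_int: "2 * int (length m) + 2 * int l < int a * int A" by simp
  show False
  proof (cases "l \<le> b * B")
    case True
    then have "l div B * B \<le> b * B" using l(2) by simp
    then have kb: "l div B \<le> b" using C(16) by simp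
    have "l div A * A \<le> a * A" using big l(1) by linarith
    then have ka: "l div A \<le> a" using C(15) by simp
    have "int (length m) + int l < int c2" using big_int C(5,9) by linarith
    then obtain c2' c3' where "candidate S T u (a - l div A) m (b - l div B) w c1 c2' c3' c4"
      using candidate_shorten_pumps[OF candidate pumps_lcm[folded l_def] ka kb] by blast
    then show False using ka kb l(3,4) by (auto simp: candidate_size_def dest: minimal)
  next
    case False
    then have "int b * int B < int l" by (metis of_nat_less_iff of_nat_mult not_le)
    then have "int c1 + eff (sigp S) < int c4" using big_int E C(9,10,13) l(5) by linarith
    moreover have "1 \<le> a" using big by (cases a) auto
    ultimately obtain c1' where "candidate S T (u @ sigp S) (a - 1) m b w c1' c2 c3 c4"
      using candidate_shift_up_cycle[OF candidate] by blast
    then show False using \<open>1 \<le> a\<close> by (auto simp: candidate_size_def dest: minimal)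
  qed
qed

lemma down_pumps_bounded: "b * B \<le> 2 * length m + 2 * lcm A B"
proof (rule ccontr)
  note C = candidate_facts and E = cap_eff
  define l where "l = lcm A B"
  have l: "(l div A) * A = l" "(l div B) * B = l" "0 < l div A" "0 < l div B" "B \<le> l"
    using lcm_quotients[OF C(15,16)] by (simp_all add: l_def)
  assume "\<not> b * B \<le> 2 * length m + 2 * l"
  then have big: "2 * length m + 2 * l < b * B" by simp
  then have "int (2 * length m + 2 * l) < int (b * B)" by linarith
  then have big_int: "2 * int (length m) + 2 * int l < int b * int B" by simp
  show False
  proof (cases "l \<le> a * A")
    case True
    then have "l div A * A \<le> a * A" using l(1) by simp
    then have ka: "l div A \<le> a" using C(15) by simp
    have "l div B * B \<le> b * B" using big l(2) by linarith
    then have kb: "l div B \<le> b" using C(16) by simp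
    have "int (length m) + int l < int c3" using big_int C(7,10) by linarith
    then obtain c2' c3' where "candidate S T u (a - l div A) m (b - l div B) w c1 c2' c3' c4"
      using candidate_shorten_pumps[OF candidate pumps_lcm[folded l_def] ka kb] by blast
    then show False using ka kb l(3,4) by (auto simp: candidate_size_def dest: minimal)
  next
    case False
    then have "int a * int A < int l" by (metis of_nat_less_iff of_nat_mult not_le)
    then have "int c4 - eff (sigm T) < int c1" using big_int E C(9,10,14) l(5) by linarith
    moreover have "1 \<le> b" using big by (cases b) auto
    ultimately obtain c4' where "candidate S T u a m (b - 1) (sigm T @ w) c1 c2 c3 c4'"
      using candidate_shift_down_cycle[OF candidate] by blast
    then show False using \<open>1 \<le> b\<close> by (auto simp: candidate_size_def dest: minimal)
  qed
qed

lemma cap_has_no_gcd_cycle: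
  assumes "m = m1 @ v @ m2" "is_cycle Tpos v" "int (gcd A B) dvd eff v"
  shows False
proof -
  note C = candidate_facts
  obtain x y where "int x * int A - int y * int B = eff v"
    using gcd_multiple_as_difference[OF C(15,16) assms(3)] .
  then have "int x * eff (sigp S) + int y * eff (sigm T) = eff v" using C(13,14) by simp
  then obtain c2' c3' where "candidate S T u (a + x) (m1 @ m2) (b + y) w c1 c2' c3' c4"
    using candidate_remove_cap_cycle[OF candidate[unfolded assms(1)] assms(2)] by blast
  moreover have "length (m1 @ m2) < length m" using assms(1,2) by (simp add: is_cycle_def)
  ultimately show False by (auto simp: candidate_size_def dest: minimal)
qed

lemma ends_distinct: "distinct (confs \<alpha> u @ confs (base (sigm T), c4) w)"
proof -
  have "distinct (confs \<alpha> u)"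
  proof (rule ccontr)
    assume "\<not> distinct (confs \<alpha> u)"
    then obtain i j where "i < j" "j \<le> length u" "target \<alpha> (take i u) = target \<alpha> (take j u)"
      by (rule not_distinct_confs)
    then show False
      using minimal[OF candidate_cut_prefix[OF candidate]] by (fastforce simp: candidate_size_def)
  qed
  moreover have "distinct (confs (base (sigm T), c4) w)"
  proof (rule ccontr)
    assume "\<not> distinct (confs (base (sigm T), c4) w)"
    then obtain i j where "i < j" "j \<le> length w"
      "target (base (sigm T), c4) (take i w) = target (base (sigm T), c4) (take j w)"
      by (rule not_distinct_confs)
    then show False
      using minimal[OF candidate_cut_suffix[OF candidate]] by (fastforce simp: candidate_size_def)
  qed
  ultimately show ?thesis using candidate_prefix_suffix_disjoint[OF candidate] by simp
qed

lemma pumped_counters_high: "n < c2" "n < c3"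
proof -
  have "0 \<le> int a * int A" "0 \<le> int b * int B" by simp_all
  then show "n < c2" "n < c3" using candidate_facts(5,7,9,10) by linarith+
qed

lemma normal_decomposition:
  "normal_decomp Q Tpos sigp sigm S T \<alpha> (u @ cpow (sigp S) a @ m @ cpow (sigm T) b @ w)
     u (cpow (sigp S) a) m (cpow (sigm T) b) w"
  using candidate candidate_arc[OF candidate] unfolding candidate_def normal_decomp_def by auto

end

theorem lemma2:
  fixes Q :: "'q set" and Tpos Tzero :: "'q trans set"
    and sigp sigm :: "'q set \<Rightarrow> 'q trans list"
    and \<alpha> \<beta> :: "'q conf"
  assumes "wf_ocs Q Tpos Tzero"
    and "good_choice Q Tpos sigp sigm"
    and "fst \<alpha> \<in> Q" and "snd \<alpha> = 0" and "fst \<beta> \<in> Q" and "snd \<beta> = 0"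
    and "\<exists>ts. is_arc Tpos Tzero \<alpha> ts \<and> target \<alpha> ts = \<beta>"
  shows "\<exists>ts. is_arc Tpos Tzero \<alpha> ts \<and> target \<alpha> ts = \<beta> \<and>
    (low (card Q) \<alpha> ts \<or>
     (\<exists>S T ts1 ts2 ts3 ts4 ts5.
        normal_decomp Q Tpos sigp sigm S T \<alpha> ts ts1 ts2 ts3 ts4 ts5 \<and>
        (\<exists>a b A B :: nat.
           ts2 = concat (replicate a (sigp S)) \<and> eff (sigp S) = int A \<and>
           ts4 = concat (replicate b (sigm T)) \<and> eff (sigm T) = - int B \<and>
           a * A \<le> 2 * length ts3 + 2 * lcm A B \<and>
           b * B \<le> 2 * length ts3 + 2 * lcm A B \<and>
           (\<forall>u v w. ts3 = u @ v @ w \<longrightarrow> \<not> (is_cycle Tpos v \<and> int (gcd A B) dvd eff v)) \<and>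
           snd (target \<alpha> (ts1 @ ts2)) > card Q \<and>
           snd (target \<alpha> (ts1 @ ts2 @ ts3)) > card Q \<and>
           distinct (confs \<alpha> ts1 @ confs (target \<alpha> (ts1 @ ts2 @ ts3 @ ts4)) ts5))))"
proof (cases "\<exists>ts. is_arc Tpos Tzero \<alpha> ts \<and> target \<alpha> ts = \<beta> \<and> low (card Q) \<alpha> ts")
  case False
  interpret high_arcs Q Tpos Tzero sigp sigm \<alpha> \<beta>
    by unfold_locales (use assms False in auto)
  obtain \<rho> where "is_arc Tpos Tzero \<alpha> \<rho>" "target \<alpha> \<rho> = \<beta>" using assms(7) by blast
  then obtain S T u a m b w c1 c2 c3 c4 where "candidate S T u a m b w c1 c2 c3 c4"
    by (rule candidate_exists)
  then obtain S T u a m b w c1 c2 c3 c4 where C: "candidate S T u a m b w c1 c2 c3 c4"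
    and min: "\<And>S' T' u' a' m' b' w' c1' c2' c3' c4'. candidate S' T' u' a' m' b' w' c1' c2' c3' c4' \<Longrightarrow>
       (candidate_size u' a' m' b' w', candidate_size u a m b w) \<notin> lex3"
    by (rule ex_minimal_candidate) blast
  interpret minimal_candidate Q Tpos Tzero sigp sigm \<alpha> \<beta> S T u m w a b c1 c2 c3 c4
    using C min by unfold_locales
  have "\<forall>m1 v m2. m = m1 @ v @ m2 \<longrightarrow> \<not> (is_cycle Tpos v \<and> int (gcd A B) dvd eff v)"
    using cap_has_no_gcd_cycle by blast
  then show ?thesis
    using candidate_arc[OF candidate] normal_decomposition candidate_facts(13,14)
      up_pumps_bounded down_pumps_bounded pumped_counters_high ends_distinct
    apply (intro exI[of _ "u @ cpow (sigp S) a @ m @ cpow (sigm T) b @ w"] conjI disjI2)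
      apply simp
     apply simp
    apply (rule exI[of _ S], rule exI[of _ T], rule exI[of _ u], rule exI[of _ "cpow (sigp S) a"],
        rule exI[of _ m], rule exI[of _ "cpow (sigm T) b"], rule exI[of _ w])
    apply (rule conjI, simp)
    apply (rule exI[of _ a], rule exI[of _ b], rule exI[of _ A], rule exI[of _ B])
    by simp
qed blast

end
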